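(* Let $\Omega\subset\mathbb{R}^n$ be a bounded, connected open set, let $\varphi\in\Phi_w(\Omega)$ and let $u\in LD_{\rm loc}(\Omega)$. Then $$\widetilde{V}^{n\times n}_\varphi(Eu)\le\|\mathcal{E}u\|_{(L^{\varphi^*}(\Omega;\mathbb{R}^{n\times n}))'}.$$ If moreover $C^1_c(\Omega;\mathbb{R}^{n\times n})$ is dense in $L^{\varphi^*}(\Omega;\mathbb{R}^{n\times n})$, then $\widetilde{V}^{n\times n}_\varphi(Eu)=\|\mathcal{E}u\|_{(L^{\varphi^*}(\Omega;\mathbb{R}^{n\times n}))'}$.
   Context: A weak $\Phi$-function on $\Omega$ ($\varphi\in\Phi_w(\Omega)$) is a function $\varphi:\Omega\times[0,\infty)\to[0,\infty]$ such that: $x\mapsto\varphi(x,|f(x)|)$ is measurable for every measurable $f$; $t\mapsto\varphi(x,t)$ is non-decreasing for every $x$; $\varphi(x,0)=\lim_{t\to0^+}\varphi(x,t)=0$ and $\lim_{t\to\infty}\varphi(x,t)=\infty$ for every $x$; there is $L\ge1$ independent of $x$ with $\varphi(x,s)/s\le L\,\varphi(x,t)/t$ for $0<s\le t$. The conjugate is $\varphi^*(x,t)=\sup_{s\ge0}(st-\varphi(x,s))$; $\|f\|_{\varphi^*}=\inf\{\lambda>0:\int_\Omega\varphi^*(x,|f|/\lambda)dx\le1\}$ for measurable $f$ (with $|\cdot|$ the Frobenius norm for matrices), and $L^{\varphi^*}(\Omega;\mathbb{R}^{n\times n})$ is the space of measurable matrix fields with finite $\|\cdot\|_{\varphi^*}$.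 $LD_{\rm loc}(\Omega)=\{u\in L^1_{\rm loc}(\Omega;\mathbb{R}^n): Eu\in L^1_{\rm loc}(\Omega;\mathbb{R}^{n\times n}_{\rm sym})\}$, where $Eu=\frac12(Du+Du^T)$ is the distributional symmetric gradient, and $\mathcal{E}u$ denotes its density (so $Eu=\mathcal{E}u\,\mathcal{L}^n$). For a matrix field $g$, the associate norm is $\|g\|_{(L^{\varphi^*}(\Omega;\mathbb{R}^{n\times n}))'}=\sup\{\int_\Omega|g|\,v\,dx: v\text{ measurable},\ \|v\|_{\varphi^*}\le1\}$. For $v\in\mathcal{M}(\Omega;\mathbb{R}^{n\times n}_{\rm sym})$ (or $v\in L^1_{\rm loc}$ viewed as a measure), $\widetilde{V}^{n\times n}_\varphi(v)=\sup\{\int_\Omega\psi:dv:\psi\in C^1_c(\Omega;\mathbb{R}^{n\times n}_{\rm sym}),\|\psi\|_{\varphi^*}\le1\}$, $A:B=\mathrm{tr}(AB^T)$. *)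

theory Defs
  imports "HOL-Analysis.Analysis"
begin

text \<open>C^k on the whole space (functions on Omega are extended by zero outside
  their compact support in Omega): C^0 = continuous; C^(k+1) = differentiable
  everywhere and every directional (partial) derivative is C^k.\<close>
fun Ck :: "nat \<Rightarrow> (real^'n \<Rightarrow> 'b::real_normed_vector) \<Rightarrow> bool" where
  "Ck 0 f = continuous_on UNIV f"
| "Ck (Suc k) f = ((\<forall>x. f differentiable (at x)) \<and>
      (\<forall>v. Ck k (\<lambda>x. frechet_derivative f (at x) v)))"

definition support_in :: "(real^'n \<Rightarrow> 'b::real_normed_vector) \<Rightarrow> (real^'n) set \<Rightarrow> bool" where
  "support_in f \<Omega> \<longleftrightarrow> compact (closure {x. f x \<noteq> 0}) \<and> closure {x. f x \<noteq> 0} \<subseteq> \<Omega>"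

definition C1c :: "(real^'n) set \<Rightarrow> (real^'n \<Rightarrow> real^'n^'n) set" where
  "C1c \<Omega> = {\<psi>. Ck 1 \<psi> \<and> support_in \<psi> \<Omega>}"

definition Cinfc :: "(real^'n) set \<Rightarrow> (real^'n \<Rightarrow> real^'n^'n) set" where
  "Cinfc \<Omega> = {\<psi>. (\<forall>k. Ck k \<psi>) \<and> support_in \<psi> \<Omega>}"

definition sym_field :: "(real^'n \<Rightarrow> real^'n^'n) \<Rightarrow> bool" where
  "sym_field \<psi> \<longleftrightarrow> (\<forall>x i j. \<psi> x $ i $ j = \<psi> x $ j $ i)"

definition frob :: "real^'n^'n \<Rightarrow> real^'n^'n \<Rightarrow> real" (infixl "\<bar>:\<bar>" 70) where
  "A \<bar>:\<bar> B = (\<Sum>i\<in>UNIV. \<Sum>j\<in>UNIV. A $ i $ j * B $ i $ j)"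

definition weak_Phi :: "(real^'n) set \<Rightarrow> (real^'n \<Rightarrow> real \<Rightarrow> ennreal) \<Rightarrow> bool" where
  "weak_Phi \<Omega> \<phi> \<longleftrightarrow>
     (\<forall>f. f \<in> borel_measurable (lebesgue_on \<Omega>) \<longrightarrow>
          (\<lambda>x. \<phi> x \<bar>f x\<bar>) \<in> borel_measurable (lebesgue_on \<Omega>)) \<and>
     (\<forall>x\<in>\<Omega>. mono_on {0..} (\<phi> x)) \<and>
     (\<forall>x\<in>\<Omega>. \<phi> x 0 = 0 \<and> ((\<phi> x) \<longlongrightarrow> 0) (at_right 0)) \<and>
     (\<forall>x\<in>\<Omega>. ((\<phi> x) \<longlongrightarrow> \<infinity>) at_top) \<and>
     (\<exists>L\<ge>1. \<forall>x\<in>\<Omega>. \<forall>s t. 0 < s \<and> s \<le> t \<longrightarrow>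
          \<phi> x s / ennreal s \<le> ennreal L * (\<phi> x t / ennreal t))"

text \<open>phi*(x,t) = sup_{s>=0} (s t - phi(x,s)); the supremum is >= 0 (s = 0), so
  truncated subtraction in ennreal gives the same value.\<close>
definition conj_Phi :: "(real^'n \<Rightarrow> real \<Rightarrow> ennreal) \<Rightarrow> real^'n \<Rightarrow> real \<Rightarrow> ennreal" where
  "conj_Phi \<phi> x t = (SUP s\<in>{0..}. ennreal (s * t) - \<phi> x s)"

text \<open>Luxemburg (quasi)norm of a scalar function h with respect to Psi on Omega
  (value \<infinity> if the defining set is empty).\<close>
definition lux :: "(real^'n) set \<Rightarrow> (real^'n \<Rightarrow> real \<Rightarrow> ennreal) \<Rightarrow> (real^'n \<Rightarrow> real) \<Rightarrow> ennreal" where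
  "lux \<Omega> \<Psi> h = Inf {ennreal r | r. r > 0 \<and>
        (\<integral>\<^sup>+ x\<in>\<Omega>. \<Psi> x (\<bar>h x\<bar> / r) \<partial>lebesgue) \<le> 1}"

text \<open>Norm of a matrix field in L^{phi*}: Frobenius norm pointwise (the norm on
  real^'n^'n is the Frobenius norm).\<close>
definition mnorm_conj :: "(real^'n) set \<Rightarrow> (real^'n \<Rightarrow> real \<Rightarrow> ennreal) \<Rightarrow> (real^'n \<Rightarrow> real^'n^'n) \<Rightarrow> ennreal" where
  "mnorm_conj \<Omega> \<phi> f = lux \<Omega> (conj_Phi \<phi>) (\<lambda>x. norm (f x))"

definition L_conj :: "(real^'n) set \<Rightarrow> (real^'n \<Rightarrow> real \<Rightarrow> ennreal) \<Rightarrow> (real^'n \<Rightarrow> real^'n^'n) set" where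
  "L_conj \<Omega> \<phi> = {f. f \<in> borel_measurable (lebesgue_on \<Omega>) \<and> mnorm_conj \<Omega> \<phi> f < \<infinity>}"

definition assoc_norm :: "(real^'n) set \<Rightarrow> (real^'n \<Rightarrow> real \<Rightarrow> ennreal) \<Rightarrow> (real^'n \<Rightarrow> real^'n^'n) \<Rightarrow> ennreal" where
  "assoc_norm \<Omega> \<phi> g = (SUP v \<in> {v. v \<in> borel_measurable (lebesgue_on \<Omega>) \<and>
        lux \<Omega> (conj_Phi \<phi>) v \<le> 1}.
        \<integral>\<^sup>+ x\<in>\<Omega>. ennreal (norm (g x) * \<bar>v x\<bar>) \<partial>lebesgue)"

definition loc_integrable :: "(real^'n) set \<Rightarrow> (real^'n \<Rightarrow> 'b::{banach,second_countable_topology}) \<Rightarrow> bool" where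
  "loc_integrable \<Omega> f \<longleftrightarrow> f \<in> borel_measurable (lebesgue_on \<Omega>) \<and>
     (\<forall>K. compact K \<and> K \<subseteq> \<Omega> \<longrightarrow> integrable (lebesgue_on K) f)"

definition mat_div :: "(real^'n \<Rightarrow> real^'n^'n) \<Rightarrow> real^'n \<Rightarrow> real^'n" where
  "mat_div \<psi> x = (\<chi> i. \<Sum>j\<in>UNIV. frechet_derivative \<psi> (at x) (axis j 1) $ i $ j)"

text \<open>w is the density of the distributional symmetric gradient Eu of u on Omega:
  w is a locally integrable symmetric-matrix field and
  <Eu, psi> = - int u . div psi  for all symmetric psi in C^infinity_c.\<close>
definition sym_grad_density :: "(real^'n) set \<Rightarrow> (real^'n \<Rightarrow> real^'n) \<Rightarrow> (real^'n \<Rightarrow> real^'n^'n) \<Rightarrow> bool" where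
  "sym_grad_density \<Omega> u w \<longleftrightarrow> loc_integrable \<Omega> w \<and> (\<forall>x\<in>\<Omega>. \<forall>i j. w x $ i $ j = w x $ j $ i) \<and>
     (\<forall>\<psi>\<in>Cinfc \<Omega>. sym_field \<psi> \<longrightarrow>
        (\<integral>x. \<psi> x \<bar>:\<bar> w x \<partial>lebesgue_on \<Omega>) = - (\<integral>x. u x \<bullet> mat_div \<psi> x \<partial>lebesgue_on \<Omega>))"

definition LD_loc :: "(real^'n) set \<Rightarrow> (real^'n \<Rightarrow> real^'n) set" where
  "LD_loc \<Omega> = {u. loc_integrable \<Omega> u \<and> (\<exists>w. sym_grad_density \<Omega> u w)}"

text \<open>V~_phi^{n x n} of the measure w L^n (w locally integrable):
  int psi : d(w L^n) = int_Omega psi : w dx.\<close>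
definition Vtilde :: "(real^'n) set \<Rightarrow> (real^'n \<Rightarrow> real \<Rightarrow> ennreal) \<Rightarrow> (real^'n \<Rightarrow> real^'n^'n) \<Rightarrow> ereal" where
  "Vtilde \<Omega> \<phi> w = (SUP \<psi> \<in> {\<psi>. \<psi> \<in> C1c \<Omega> \<and> sym_field \<psi> \<and> mnorm_conj \<Omega> \<phi> \<psi> \<le> 1}.
        ereal (\<integral>x. \<psi> x \<bar>:\<bar> w x \<partial>lebesgue_on \<Omega>))"

end

(* The inequality Vtilde(Eu) <= ||Eu||' is immediate: an admissible test field psi satisfies
   int psi : w <= int |w| |psi|, and |psi| is admissible for the associate norm.

   For the converse fix v with ||v||_{phi*} <= 1 and a compact K in Omega. The symmetric field
   f = 1_K |v| w / |w| has ||f||_{phi*} <= 1 and f : w = 1_K |v| |w|. By density f is approximated by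
   C^1_c fields; symmetrising them, truncating them smoothly at level k and multiplying by a cut-off
   keeps them admissible up to a factor 1 + eta, while the error is negligible because bounded fields
   supported in a fixed compact set with small Luxemburg norm have small integral against |w|.
   Hence int T_k(f) : w <= Vtilde(Eu) for the truncation T_k, and Fatou's lemma along a compact
   exhaustion of Omega with k -> infinity gives int |v| |w| <= Vtilde(Eu). *)

theory Submission
  imports Defs
begin

section \<open>The conjugate function and the Luxemburg norm\<close>

lemma ennreal_add_le: "ennreal (x + y) \<le> ennreal x + ennreal y"
  by (smt (verit, best) add_increasing add_increasing2 ennreal_0 ennreal_le_iff2 ennreal_plus)

lemma ennreal_mult_Inf_image:
  fixes R :: "real set"
  assumes "R \<noteq> {}"
  shows "ennreal c * Inf (ennreal ` R) = Inf ((\<lambda>r. ennreal c * ennreal r) ` R)"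
proof -
  have "continuous (at_right (Inf (ennreal ` R))) ((*) (ennreal c))"
    unfolding continuous_within by (intro ennreal_tendsto_cmult tendsto_ident_at) auto
  then show ?thesis
    using continuous_at_Inf_mono[of "(*) (ennreal c)" "ennreal ` R"] assms
    by (auto simp: mono_def mult_left_mono image_comp)
qed

lemma ennreal_Inf_add_Inf:
  fixes A B :: "ennreal set"
  assumes "A \<noteq> {}" "B \<noteq> {}"
  shows "Inf A + Inf B = (INF a\<in>A. INF b\<in>B. a + b)"
proof -
  have cont: "continuous (at_right x) (\<lambda>a. a + c)" "continuous (at_right x) (\<lambda>a. c + a)"
    for x c :: ennreal
    unfolding continuous_within by (intro tendsto_intros)+
  have "Inf A + Inf B = (INF a\<in>A. a + Inf B)"
    using continuous_at_Inf_mono[OF _ cont(1)] assms by (simp add: mono_def image_comp)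
  also have "\<dots> = (INF a\<in>A. INF b\<in>B. a + b)"
    using continuous_at_Inf_mono[OF _ cont(2)] assms by (simp add: mono_def image_comp)
  finally show ?thesis .
qed

lemma conj_Phi_mono: "t1 \<le> t2 \<Longrightarrow> conj_Phi \<phi> x t1 \<le> conj_Phi \<phi> x t2"
  unfolding conj_Phi_def
  by (rule SUP_mono) (force intro!: ennreal_minus_mono ennreal_leI mult_left_mono)

lemma mono_conj_Phi: "mono (conj_Phi \<phi> x)"
  by (rule monoI) (rule conj_Phi_mono)

lemma conj_Phi_ge: "0 \<le> s \<Longrightarrow> ennreal (s * t) - \<phi> x s \<le> conj_Phi \<phi> x t"
  unfolding conj_Phi_def by (intro SUP_upper) auto

lemma conj_Phi_zero [simp]: "conj_Phi \<phi> x 0 = 0"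
  unfolding conj_Phi_def by simp

lemma conj_Phi_convex:
  assumes "0 \<le> l" "l \<le> 1"
  shows "conj_Phi \<phi> x (l * t1 + (1 - l) * t2)
           \<le> ennreal l * conj_Phi \<phi> x t1 + ennreal (1 - l) * conj_Phi \<phi> x t2"
  unfolding conj_Phi_def[of \<phi> x "l * t1 + (1 - l) * t2"]
proof (rule SUP_least)
  fix s :: real assume s: "s \<in> {0..}"
  have "ennreal (s * (l * t1 + (1 - l) * t2)) - \<phi> x s
        \<le> ennreal l * (ennreal (s * t1) - \<phi> x s) + ennreal (1 - l) * (ennreal (s * t2) - \<phi> x s)"
  proof (cases "\<phi> x s")
    case (real p)
    have "ennreal (s * (l * t1 + (1 - l) * t2) - p) = ennreal (l * (s * t1 - p) + (1 - l) * (s * t2 - p))"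
      by (simp add: algebra_simps)
    also have "\<dots> \<le> ennreal (l * (s * t1 - p)) + ennreal ((1 - l) * (s * t2 - p))"
      by (rule ennreal_add_le)
    also have "\<dots> = ennreal l * ennreal (s * t1 - p) + ennreal (1 - l) * ennreal (s * t2 - p)"
      using assms by (simp add: ennreal_mult')
    finally show ?thesis using real by (simp add: ennreal_minus)
  qed simp
  also have "\<dots> \<le> ennreal l * conj_Phi \<phi> x t1 + ennreal (1 - l) * conj_Phi \<phi> x t2"
    using s by (intro add_mono mult_left_mono conj_Phi_ge) auto
  finally show "ennreal (s * (l * t1 + (1 - l) * t2)) - \<phi> x s
      \<le> ennreal l * conj_Phi \<phi> x t1 + ennreal (1 - l) * conj_Phi \<phi> x t2" .
qed

text \<open>Restricting the supremum to rationals makes the conjugate of a measurable family measurable.\<close>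

lemma conj_Phi_eq_SUP_Rats:
  assumes mono: "mono_on {0..} (\<phi> x)" and "0 \<le> t"
  shows "conj_Phi \<phi> x t = (SUP q\<in>{q \<in> \<rat>. 0 \<le> q}. ennreal (q * t) - \<phi> x q)"
    (is "_ = ?R")
proof (rule antisym)
  show "?R \<le> conj_Phi \<phi> x t"
    unfolding conj_Phi_def by (rule SUP_subset_mono) auto
  show "conj_Phi \<phi> x t \<le> ?R"
    unfolding conj_Phi_def
  proof (rule SUP_least)
    fix s :: real assume s: "s \<in> {0..}"
    show "ennreal (s * t) - \<phi> x s \<le> ?R"
    proof (rule ennreal_le_epsilon)
      fix e :: real assume e: "0 < e"
      obtain q where q: "q \<in> \<rat>" "0 \<le> q" "q \<le> s" "s * t \<le> q * t + e"
      proof (cases "s = 0")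
        case False
        then have "max 0 (s - e / (t + 1)) < s" using s e \<open>0 \<le> t\<close> by auto
        then obtain q where q: "q \<in> \<rat>" "max 0 (s - e / (t + 1)) < q" "q < s"
          using Rats_dense_in_real by blast
        have "(s - q) * t \<le> e / (t + 1) * t" using q \<open>0 \<le> t\<close> by (intro mult_right_mono) auto
        also have "\<dots> \<le> e" using e \<open>0 \<le> t\<close> by (simp add: field_simps)
        finally show ?thesis using that[of q] q by (auto simp: algebra_simps)
      qed (use that[of 0] e in auto)
      have "\<phi> x q \<le> \<phi> x s" using mono q s by (auto intro: mono_onD)
      then have "ennreal (s * t) - \<phi> x s \<le> ennreal (q * t + e) - \<phi> x q"
        using q by (intro ennreal_minus_mono ennreal_leI) auto
      also have "\<dots> \<le> (ennreal (q * t) - \<phi> x q) + ennreal e"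
        using q e \<open>0 \<le> t\<close> add_diff_le_ennreal[of "ennreal e" "ennreal (q * t)" "\<phi> x q"]
        by (simp add: ennreal_plus add.commute)
      also have "\<dots> \<le> ?R + ennreal e"
        using q by (intro add_right_mono SUP_upper) auto
      finally show "ennreal (s * t) - \<phi> x s \<le> ?R + ennreal e" .
    qed
  qed
qed

lemma measurable_conj_Phi:
  assumes wp: "weak_Phi \<Omega> \<phi>" and t: "t \<in> borel_measurable (lebesgue_on \<Omega>)"
    and t_nonneg: "\<And>x. x \<in> \<Omega> \<Longrightarrow> 0 \<le> t x"
  shows "(\<lambda>x. conj_Phi \<phi> x (t x)) \<in> borel_measurable (lebesgue_on \<Omega>)"
proof -
  have mono: "\<And>x. x \<in> \<Omega> \<Longrightarrow> mono_on {0..} (\<phi> x)"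
    using wp unfolding weak_Phi_def by blast
  have "(\<lambda>x. SUP q\<in>{q \<in> \<rat>. 0 \<le> q}. ennreal (q * t x) - \<phi> x q) \<in> borel_measurable (lebesgue_on \<Omega>)"
  proof (rule borel_measurable_SUP)
    show "countable {q::real \<in> \<rat>. 0 \<le> q}"
      by (rule countable_subset[OF _ countable_rat]) auto
    fix q :: real assume "q \<in> {q \<in> \<rat>. 0 \<le> q}"
    then have "(\<lambda>x. \<phi> x \<bar>q\<bar>) \<in> borel_measurable (lebesgue_on \<Omega>)"
      using wp[unfolded weak_Phi_def, THEN conjunct1, rule_format, of "\<lambda>_. q"] by simp
    then show "(\<lambda>x. ennreal (q * t x) - \<phi> x q) \<in> borel_measurable (lebesgue_on \<Omega>)"
      using \<open>q \<in> _\<close> t by simp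
  qed
  then show ?thesis
    by (rule measurable_cong[THEN iffD1, rotated])
       (simp add: conj_Phi_eq_SUP_Rats mono t_nonneg space_restrict_space)
qed

lemma conj_Phi_unbounded:
  assumes "((\<phi> x) \<longlongrightarrow> 0) (at_right 0)"
  obtains j :: nat where "ennreal R < conj_Phi \<phi> x (real j)"
proof -
  have "\<forall>\<^sub>F s in at_right 0. \<phi> x s < 1"
    using assms by (rule order_tendstoD(2)) simp
  then obtain s where s: "0 < s" "\<phi> x s \<le> 1"
    by (metis eventually_at_right_field field_lbound_gt_zero less_imp_le)
  obtain j :: nat where "(\<bar>R\<bar> + 1) / s < real j"
    using reals_Archimedean2 by blast
  then have "ennreal R < ennreal (s * real j - 1)"
    using s by (intro ennreal_lessI) (auto simp: field_simps)
  also have "\<dots> = ennreal (s * real j) - 1"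
    by (simp add: ennreal_minus flip: ennreal_1)
  also have "\<dots> \<le> ennreal (s * real j) - \<phi> x s"
    using s by (intro ennreal_minus_mono) auto
  also have "\<dots> \<le> conj_Phi \<phi> x (real j)"
    using s by (intro conj_Phi_ge) simp
  finally show ?thesis by (rule that)
qed

lemma lux_eq_Inf_image:
  "lux \<Omega> \<Psi> h = Inf (ennreal ` {r. 0 < r \<and> (\<integral>\<^sup>+ x\<in>\<Omega>. \<Psi> x (\<bar>h x\<bar> / r) \<partial>lebesgue) \<le> 1})"
  unfolding lux_def by (rule arg_cong[where f=Inf]) auto

lemma lux_le:
  "0 < r \<Longrightarrow> (\<integral>\<^sup>+ x\<in>\<Omega>. \<Psi> x (\<bar>h x\<bar> / r) \<partial>lebesgue) \<le> 1 \<Longrightarrow> lux \<Omega> \<Psi> h \<le> ennreal r"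
  unfolding lux_eq_Inf_image by (intro Inf_lower) auto

lemma lux_lessE:
  assumes "lux \<Omega> \<Psi> h < ennreal c"
  obtains r where "0 < r" "r < c" "(\<integral>\<^sup>+ x\<in>\<Omega>. \<Psi> x (\<bar>h x\<bar> / r) \<partial>lebesgue) \<le> 1"
  using assms unfolding lux_eq_Inf_image Inf_less_iff by (auto simp: ennreal_less_iff)

lemma lux_conj_Phi_zero_le: "lux \<Omega> (conj_Phi \<phi>) (\<lambda>x. 0) \<le> 1"
  using lux_le[where r=1 and h="\<lambda>x. 0" and \<Psi>="conj_Phi \<phi>" and \<Omega>=\<Omega>] by simp

lemma lux_scale_le:
  assumes mono: "\<And>x. mono (\<Psi> x)" and c: "0 < c" and le: "\<And>x. x \<in> \<Omega> \<Longrightarrow> \<bar>g x\<bar> \<le> c * \<bar>h x\<bar>"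
  shows "lux \<Omega> \<Psi> g \<le> ennreal c * lux \<Omega> \<Psi> h"
proof -
  define R where "R = {r. 0 < r \<and> (\<integral>\<^sup>+ x\<in>\<Omega>. \<Psi> x (\<bar>h x\<bar> / r) \<partial>lebesgue) \<le> 1}"
  have "lux \<Omega> \<Psi> g \<le> ennreal c * ennreal r" if r: "r \<in> R" for r
  proof -
    have "(\<integral>\<^sup>+ x\<in>\<Omega>. \<Psi> x (\<bar>g x\<bar> / (c * r)) \<partial>lebesgue) \<le> (\<integral>\<^sup>+ x\<in>\<Omega>. \<Psi> x (\<bar>h x\<bar> / r) \<partial>lebesgue)"
    proof (intro nn_integral_mono)
      fix x
      have "x \<in> \<Omega> \<Longrightarrow> \<bar>g x\<bar> / (c * r) \<le> \<bar>h x\<bar> / r"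
        using le[of x] c r by (simp add: R_def field_simps)
      then show "\<Psi> x (\<bar>g x\<bar> / (c * r)) * indicator \<Omega> x \<le> \<Psi> x (\<bar>h x\<bar> / r) * indicator \<Omega> x"
        using mono by (auto simp: indicator_def monoD)
    qed
    then show ?thesis
      using r c lux_le[where r="c * r" and h=g] by (auto simp: R_def ennreal_mult)
  qed
  then show ?thesis
    using c by (cases "R = {}") (auto simp: lux_eq_Inf_image R_def[symmetric] ennreal_mult_Inf_image
        ennreal_mult_top intro: Inf_greatest)
qed

lemma conj_modular_triangle:
  assumes wp: "weak_Phi \<Omega> \<phi>" and \<Omega>: "\<Omega> \<in> sets lebesgue"
    and g: "g \<in> borel_measurable (lebesgue_on \<Omega>)" and h: "h \<in> borel_measurable (lebesgue_on \<Omega>)"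
    and le: "\<And>x. x \<in> \<Omega> \<Longrightarrow> \<bar>k x\<bar> \<le> \<bar>g x\<bar> + \<bar>h x\<bar>"
    and a: "0 < a" "(\<integral>\<^sup>+ x\<in>\<Omega>. conj_Phi \<phi> x (\<bar>g x\<bar> / a) \<partial>lebesgue) \<le> 1"
    and b: "0 < b" "(\<integral>\<^sup>+ x\<in>\<Omega>. conj_Phi \<phi> x (\<bar>h x\<bar> / b) \<partial>lebesgue) \<le> 1"
  shows "(\<integral>\<^sup>+ x\<in>\<Omega>. conj_Phi \<phi> x (\<bar>k x\<bar> / (a + b)) \<partial>lebesgue) \<le> 1"
proof -
  define l where "l = a / (a + b)"
  have l: "0 \<le> l" "l \<le> 1" "1 - l = b / (a + b)"
    using a b by (auto simp: l_def field_simps)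
  have mg: "(\<lambda>x. conj_Phi \<phi> x (\<bar>g x\<bar> / a)) \<in> borel_measurable (lebesgue_on \<Omega>)"
    using a g by (intro measurable_conj_Phi[OF wp]) auto
  have mh: "(\<lambda>x. conj_Phi \<phi> x (\<bar>h x\<bar> / b)) \<in> borel_measurable (lebesgue_on \<Omega>)"
    using b h by (intro measurable_conj_Phi[OF wp]) auto
  have "(\<integral>\<^sup>+ x. conj_Phi \<phi> x (\<bar>k x\<bar> / (a + b)) \<partial>lebesgue_on \<Omega>)
     \<le> (\<integral>\<^sup>+ x. ennreal l * conj_Phi \<phi> x (\<bar>g x\<bar> / a)
                 + ennreal (1 - l) * conj_Phi \<phi> x (\<bar>h x\<bar> / b) \<partial>lebesgue_on \<Omega>)"
  proof (rule nn_integral_mono)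
    fix x assume "x \<in> space (lebesgue_on \<Omega>)"
    then have "\<bar>k x\<bar> / (a + b) \<le> l * (\<bar>g x\<bar> / a) + (1 - l) * (\<bar>h x\<bar> / b)"
      using le[of x] a b unfolding l(3)
      by (auto simp: l_def simp flip: add_divide_distrib intro!: divide_right_mono)
    then show "conj_Phi \<phi> x (\<bar>k x\<bar> / (a + b))
        \<le> ennreal l * conj_Phi \<phi> x (\<bar>g x\<bar> / a) + ennreal (1 - l) * conj_Phi \<phi> x (\<bar>h x\<bar> / b)"
      by (rule order_trans[OF conj_Phi_mono conj_Phi_convex[OF l(1,2)]])
  qed
  also have "\<dots> = ennreal l * (\<integral>\<^sup>+ x. conj_Phi \<phi> x (\<bar>g x\<bar> / a) \<partial>lebesgue_on \<Omega>)
                 + ennreal (1 - l) * (\<integral>\<^sup>+ x. conj_Phi \<phi> x (\<bar>h x\<bar> / b) \<partial>lebesgue_on \<Omega>)"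
    using mg mh by (simp add: nn_integral_add nn_integral_cmult)
  also have "\<dots> \<le> ennreal l * 1 + ennreal (1 - l) * 1"
    using a b \<Omega> by (intro add_mono mult_left_mono) (auto simp: nn_integral_restrict_space)
  also have "\<dots> = 1"
    using l by (simp flip: ennreal_plus)
  finally show ?thesis
    using \<Omega> by (simp add: nn_integral_restrict_space)
qed

lemma lux_triangle:
  assumes wp: "weak_Phi \<Omega> \<phi>" and \<Omega>: "\<Omega> \<in> sets lebesgue"
    and g: "g \<in> borel_measurable (lebesgue_on \<Omega>)" and h: "h \<in> borel_measurable (lebesgue_on \<Omega>)"
    and le: "\<And>x. x \<in> \<Omega> \<Longrightarrow> \<bar>k x\<bar> \<le> \<bar>g x\<bar> + \<bar>h x\<bar>"
  shows "lux \<Omega> (conj_Phi \<phi>) k \<le> lux \<Omega> (conj_Phi \<phi>) g + lux \<Omega> (conj_Phi \<phi>) h"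
proof -
  define R where "R f = {r. 0 < r \<and> (\<integral>\<^sup>+ x\<in>\<Omega>. conj_Phi \<phi> x (\<bar>f x\<bar> / r) \<partial>lebesgue) \<le> 1}"
    for f
  have le_sum: "lux \<Omega> (conj_Phi \<phi>) k \<le> ennreal a + ennreal b" if "a \<in> R g" "b \<in> R h" for a b
  proof -
    have "lux \<Omega> (conj_Phi \<phi>) k \<le> ennreal (a + b)"
      using that by (intro lux_le conj_modular_triangle[OF wp \<Omega> g h le]) (auto simp: R_def)
    then show ?thesis
      using that by (simp add: R_def ennreal_plus)
  qed
  show ?thesis
  proof (cases "R g = {} \<or> R h = {}")
    case False
    then show ?thesis
      unfolding lux_eq_Inf_image[of \<Omega> _ g] lux_eq_Inf_image[of \<Omega> _ h] R_def[symmetric]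
      by (auto simp: ennreal_Inf_add_Inf image_comp le_sum intro!: INF_greatest)
  qed (auto simp: lux_eq_Inf_image[of \<Omega> _ g] lux_eq_Inf_image[of \<Omega> _ h] R_def[symmetric])
qed

section \<open>Continuously differentiable functions\<close>

definition C1 :: "('a::real_normed_vector \<Rightarrow> 'b::real_normed_vector) \<Rightarrow> bool" where
  "C1 f \<longleftrightarrow> (\<exists>D. (\<forall>x. (f has_derivative D x) (at x)) \<and> (\<forall>v. continuous_on UNIV (\<lambda>x. D x v)))"

lemma C1I:
  "(\<And>x. (f has_derivative D x) (at x)) \<Longrightarrow> (\<And>v. continuous_on UNIV (\<lambda>x. D x v)) \<Longrightarrow> C1 f"
  unfolding C1_def by blast

lemma C1E:
  assumes "C1 f"
  obtains D where "\<And>x. (f has_derivative D x) (at x)" "\<And>v. continuous_on UNIV (\<lambda>x. D x v)"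
  using assms that unfolding C1_def by auto

lemma Ck_1_iff_C1: "Ck 1 f \<longleftrightarrow> C1 f"
proof
  assume "Ck 1 f"
  then show "C1 f"
    by (intro C1I[of f "\<lambda>x. frechet_derivative f (at x)"]) (auto simp: frechet_derivative_works)
next
  assume "C1 f"
  then obtain D where D: "\<And>x. (f has_derivative D x) (at x)" "\<And>v. continuous_on UNIV (\<lambda>x. D x v)"
    by (metis C1E)
  then have "frechet_derivative f (at x) = D x" for x
    by (metis frechet_derivative_at)
  then show "Ck 1 f"
    using D by (auto simp: differentiable_def)
qed

lemma C1_imp_continuous_on: "C1 f \<Longrightarrow> continuous_on UNIV f"
  by (auto elim!: C1E intro!: continuous_at_imp_continuous_on dest: has_derivative_continuous)

lemma C1_const: "C1 (\<lambda>x. c)"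
  by (rule C1I[where D="\<lambda>x v. 0"]) auto

lemma C1_id: "C1 (\<lambda>x. x)"
  by (rule C1I[where D="\<lambda>x v. v"]) (auto intro!: derivative_eq_intros)

lemma C1_add:
  assumes "C1 f" "C1 g"
  shows "C1 (\<lambda>x. f x + g x)"
proof -
  obtain Df Dg where
    "\<And>x. (f has_derivative Df x) (at x)" "\<And>v. continuous_on UNIV (\<lambda>x. Df x v)"
    "\<And>x. (g has_derivative Dg x) (at x)" "\<And>v. continuous_on UNIV (\<lambda>x. Dg x v)"
    using assms by (metis C1E)
  then show ?thesis
    by (intro C1I[where D="\<lambda>x v. Df x v + Dg x v"]) (auto intro!: has_derivative_add continuous_on_add)
qed

lemma C1_scaleR:
  fixes a :: "'a::real_normed_vector \<Rightarrow> real"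
  assumes "C1 a" "C1 f"
  shows "C1 (\<lambda>x. a x *\<^sub>R f x)"
proof -
  obtain Da Df where
    "\<And>x. (a has_derivative Da x) (at x)" "\<And>v. continuous_on UNIV (\<lambda>x. Da x v)"
    "\<And>x. (f has_derivative Df x) (at x)" "\<And>v. continuous_on UNIV (\<lambda>x. Df x v)"
    using assms by (metis C1E)
  moreover have "continuous_on UNIV a" "continuous_on UNIV f"
    using assms by (auto intro: C1_imp_continuous_on)
  ultimately show ?thesis
    by (intro C1I[where D="\<lambda>x h. a x *\<^sub>R Df x h + Da x h *\<^sub>R f x"])
       (auto intro!: has_derivative_scaleR continuous_intros)
qed

lemma C1_inner:
  fixes f g :: "'a::real_normed_vector \<Rightarrow> 'b::real_inner"
  assumes "C1 f" "C1 g"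
  shows "C1 (\<lambda>x. f x \<bullet> g x)"
proof -
  obtain Df Dg where
    "\<And>x. (f has_derivative Df x) (at x)" "\<And>v. continuous_on UNIV (\<lambda>x. Df x v)"
    "\<And>x. (g has_derivative Dg x) (at x)" "\<And>v. continuous_on UNIV (\<lambda>x. Dg x v)"
    using assms by (metis C1E)
  moreover have "continuous_on UNIV f" "continuous_on UNIV g"
    using assms by (auto intro: C1_imp_continuous_on)
  ultimately show ?thesis
    by (intro C1I[where D="\<lambda>x h. f x \<bullet> Dg x h + Df x h \<bullet> g x"])
       (auto intro!: has_derivative_inner continuous_intros)
qed

lemma C1_bounded_linear_comp:
  assumes L: "bounded_linear L" and "C1 f"
  shows "C1 (\<lambda>x. L (f x))"
proof -
  obtain Df where "\<And>x. (f has_derivative Df x) (at x)" "\<And>v. continuous_on UNIV (\<lambda>x. Df x v)"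
    using \<open>C1 f\<close> by (metis C1E)
  moreover have "continuous_on UNIV L"
    using L by (simp add: linear_continuous_on)
  ultimately show ?thesis
    by (intro C1I[where D="\<lambda>x h. L (Df x h)"])
       (auto intro!: bounded_linear.has_derivative[OF L] elim: continuous_on_compose2)
qed

lemma C1_scale: "C1 f \<Longrightarrow> C1 (\<lambda>x. c *\<^sub>R f x)"
  by (rule C1_bounded_linear_comp[OF bounded_linear_scaleR_right])

lemma C1_diff: "C1 f \<Longrightarrow> C1 g \<Longrightarrow> C1 (\<lambda>x. f x - g x)"
  using C1_add[OF _ C1_scale[of g "-1"]] by simp

lemma C1_sum: "finite I \<Longrightarrow> (\<And>i. i \<in> I \<Longrightarrow> C1 (f i)) \<Longrightarrow> C1 (\<lambda>x. \<Sum>i\<in>I. f i x)"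
  by (induction I rule: finite_induct) (auto intro: C1_add C1_const)

lemma C1_real_comp:
  fixes a :: "'a::real_normed_vector \<Rightarrow> real"
  assumes a: "C1 a" and range: "\<And>x. a x \<in> S"
    and deriv: "\<And>t. t \<in> S \<Longrightarrow> (\<sigma> has_real_derivative \<sigma>' t) (at t)"
    and cont: "continuous_on S \<sigma>'"
  shows "C1 (\<lambda>x. \<sigma> (a x))"
proof -
  obtain Da where Da: "\<And>x. (a has_derivative Da x) (at x)" "\<And>v. continuous_on UNIV (\<lambda>x. Da x v)"
    using a by (metis C1E)
  have "continuous_on UNIV (\<lambda>x. \<sigma>' (a x))"
    using range by (intro continuous_on_compose2[OF cont C1_imp_continuous_on[OF a]]) auto
  moreover have "((\<lambda>x. \<sigma> (a x)) has_derivative (\<lambda>h. \<sigma>' (a x) * Da x h)) (at x)" for x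
    using deriv[OF range[of x]] unfolding has_field_derivative_def
    by (rule has_derivative_compose[OF Da(1)])
  ultimately show ?thesis
    using Da(2) by (intro C1I[where D="\<lambda>x h. \<sigma>' (a x) * Da x h"] continuous_on_mult)
qed

section \<open>Smooth cut-off functions\<close>

definition pos_sq :: "real \<Rightarrow> real" where
  "pos_sq t = (max t 0)\<^sup>2"

lemma pos_sq_nonneg: "0 \<le> pos_sq t"
  by (simp add: pos_sq_def)

lemma pos_sq_pos_iff: "0 < pos_sq t \<longleftrightarrow> 0 < t"
  by (auto simp: pos_sq_def max_def)

lemma pos_sq_eq_0: "t \<le> 0 \<Longrightarrow> pos_sq t = 0"
  by (simp add: pos_sq_def)

lemma pos_sq_le_1: "t \<le> 1 \<Longrightarrow> pos_sq t \<le> 1"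
  by (auto simp: pos_sq_def max_def power_le_one)

lemma pos_sq_has_real_derivative: "(pos_sq has_real_derivative 2 * max t 0) (at t)"
proof (cases t "0::real" rule: linorder_cases)
  case less
  have "((\<lambda>t. 0) has_real_derivative 0) (at t)"
    by simp
  then have "(pos_sq has_real_derivative 0) (at t)"
    by (rule has_field_derivative_transform_within_open[where S="{..<0}"])
       (use less in \<open>auto simp: pos_sq_def\<close>)
  then show ?thesis
    using less by simp
next
  case equal
  have "((\<lambda>y. max y 0) \<longlongrightarrow> 0) (at (0::real))"
    using tendsto_max[OF tendsto_ident_at tendsto_const, of 0 0] by simp
  moreover have "\<forall>\<^sub>F y in at (0::real). max y 0 = (pos_sq y - pos_sq 0) / (y - 0)"
    by (auto simp: pos_sq_def eventually_at_filter power2_eq_square max_def)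
  ultimately have "((\<lambda>y. (pos_sq y - pos_sq 0) / (y - 0)) \<longlongrightarrow> 0) (at 0)"
    by (rule Lim_transform_eventually)
  then show ?thesis
    using equal by (simp add: has_field_derivative_iff)
next
  case greater
  have "((\<lambda>t. t\<^sup>2) has_real_derivative 2 * t) (at t)"
    by (auto intro!: derivative_eq_intros)
  then have "(pos_sq has_real_derivative 2 * t) (at t)"
    by (rule has_field_derivative_transform_within_open[where S="{0<..}"])
       (use greater in \<open>auto simp: pos_sq_def\<close>)
  then show ?thesis
    using greater by simp
qed

lemma C1_pos_sq_comp: "C1 a \<Longrightarrow> C1 (\<lambda>x. pos_sq (a x))"
  by (rule C1_real_comp[where S=UNIV]) (auto intro!: pos_sq_has_real_derivative continuous_intros)

lemma C1_bump_sum: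
  fixes F :: "'a::real_inner set"
  assumes "finite F" "0 < r"
  defines "S \<equiv> \<lambda>x. \<Sum>c\<in>F. pos_sq (r\<^sup>2 - (x - c) \<bullet> (x - c))"
  shows "C1 S" and "0 \<le> S x" and "0 < S x \<longleftrightarrow> (\<exists>c\<in>F. dist x c < r)"
proof -
  show "C1 S"
    unfolding S_def using \<open>finite F\<close>
    by (intro C1_sum C1_pos_sq_comp C1_diff C1_const C1_inner C1_id)
  show "0 \<le> S x"
    unfolding S_def by (intro sum_nonneg pos_sq_nonneg)
  have "0 < pos_sq (r\<^sup>2 - (x - c) \<bullet> (x - c)) \<longleftrightarrow> \<not> r\<^sup>2 \<le> (dist x c)\<^sup>2" for c
    by (auto simp: pos_sq_pos_iff dist_norm power2_norm_eq_inner)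
  also have "\<dots> c \<longleftrightarrow> dist x c < r" for c
    using \<open>0 < r\<close> by (simp add: abs_le_square_iff[symmetric] not_le)
  finally have term_pos_iff: "0 < pos_sq (r\<^sup>2 - (x - c) \<bullet> (x - c)) \<longleftrightarrow> dist x c < r" for c .
  have "0 < S x \<longleftrightarrow> (\<exists>c\<in>F. 0 < pos_sq (r\<^sup>2 - (x - c) \<bullet> (x - c)))"
    unfolding S_def using \<open>finite F\<close>
    by (metis (no_types, lifting) not_le sum_nonpos sum_pos2 pos_sq_nonneg)
  then show "0 < S x \<longleftrightarrow> (\<exists>c\<in>F. dist x c < r)"
    by (simp add: term_pos_iff)
qed


lemma C1_cutoff_exists:
  fixes K \<Omega> :: "'a::euclidean_space set"
  assumes K: "compact K" and \<Omega>: "open \<Omega>" and "K \<subseteq> \<Omega>"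
  obtains \<theta> :: "'a \<Rightarrow> real"
  where "C1 \<theta>" "\<And>x. 0 \<le> \<theta> x" "\<And>x. \<theta> x \<le> 1" "\<And>x. x \<in> K \<Longrightarrow> \<theta> x = 1"
    "compact (closure {x. \<theta> x \<noteq> 0})" "closure {x. \<theta> x \<noteq> 0} \<subseteq> \<Omega>"
proof (cases "K = {}")
  case True
  show ?thesis
    by (rule that[of "\<lambda>x. 0"]) (auto simp: True C1_const)
next
  case False
  obtain e where e: "0 < e" "(\<Union>x\<in>K. ball x e) \<subseteq> \<Omega>"
    using compact_subset_open_imp_ball_epsilon_subset[OF K \<Omega> \<open>K \<subseteq> \<Omega>\<close>] by blast
  define r where "r = e / 2"
  have r: "0 < r" "r < e"
    using e by (auto simp: r_def)
  obtain F where F: "F \<subseteq> K" "finite F" "K \<subseteq> (\<Union>c\<in>F. ball c r)"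
    using compactE_image[OF K, of K "\<lambda>c. ball c r"] r by force
  define S where "S x = (\<Sum>c\<in>F. pos_sq (r\<^sup>2 - (x - c) \<bullet> (x - c)))" for x
  have S: "C1 S" "\<And>x. 0 \<le> S x" "\<And>x. 0 < S x \<longleftrightarrow> (\<exists>c\<in>F. dist x c < r)"
    unfolding S_def[abs_def] using C1_bump_sum[OF F(2) r(1)] by blast+
  obtain x0 where x0: "x0 \<in> K" "\<And>y. y \<in> K \<Longrightarrow> S x0 \<le> S y"
    using continuous_attains_inf[OF K False continuous_on_subset[OF C1_imp_continuous_on[OF S(1)]]]
    by auto
  define m where "m = S x0"
  have m: "0 < m"
    using x0(1) F(3) S(3)[of x0] by (auto simp: m_def dist_commute)
  define \<theta> where "\<theta> x = 1 - pos_sq (1 - S x / m)" for x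
  define B where "B = (\<Union>c\<in>F. cball c r)"
  have support: "{x. \<theta> x \<noteq> 0} \<subseteq> B"
  proof
    fix x assume "x \<in> {x. \<theta> x \<noteq> 0}"
    then have "0 < S x"
      using S(2)[of x] by (auto simp: \<theta>_def pos_sq_def less_le)
    then show "x \<in> B"
      using S(3) by (force simp: B_def dist_commute)
  qed
  have "compact B"
    unfolding B_def using F(2) by (intro compact_UN) auto
  have "B \<subseteq> \<Omega>"
  proof
    fix x assume "x \<in> B"
    then obtain c where "c \<in> F" "dist c x \<le> r"
      by (auto simp: B_def)
    then show "x \<in> \<Omega>"
      using e(2) F(1) r(2) by force
  qed
  show ?thesis
  proof (rule that[of \<theta>])
    show "C1 \<theta>"
      unfolding \<theta>_def using C1_scale[OF S(1), of "1 / m"]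
      by (intro C1_diff C1_const C1_pos_sq_comp) simp
    show "0 \<le> \<theta> x" "\<theta> x \<le> 1" for x
      using S(2)[of x] m pos_sq_le_1 pos_sq_nonneg by (auto simp: \<theta>_def)
    show "\<theta> x = 1" if "x \<in> K" for x
      using x0(2)[OF that] m by (simp add: \<theta>_def m_def pos_sq_eq_0)
    show "compact (closure {x. \<theta> x \<noteq> 0})"
      using support \<open>compact B\<close> by (metis compact_closure compact_imp_bounded bounded_subset)
    show "closure {x. \<theta> x \<noteq> 0} \<subseteq> \<Omega>"
      using closure_minimal[OF support compact_imp_closed[OF \<open>compact B\<close>]] \<open>B \<subseteq> \<Omega>\<close> by blast
  qed
qed

section \<open>Symmetric part and soft truncation of matrices\<close>

lemma frob_eq_inner: "A \<bar>:\<bar> B = A \<bullet> B"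
  unfolding frob_def inner_vec_def by (simp add: inner_real_def)

lemma norm_transpose: "norm (transpose A) = norm (A :: real^'n^'m)"
proof -
  have "transpose A \<bullet> transpose A = A \<bullet> A"
    unfolding inner_vec_def transpose_def inner_real_def by (simp, rule sum.swap)
  then show ?thesis
    by (simp add: norm_eq_sqrt_inner)
qed

definition sym_part :: "real^'n^'n \<Rightarrow> real^'n^'n" where
  "sym_part A = (1/2) *\<^sub>R (A + transpose A)"

lemma bounded_linear_sym_part: "bounded_linear sym_part"
  unfolding linear_conv_bounded_linear[symmetric] sym_part_def
  by (rule linearI) (auto simp: transpose_def vec_eq_iff algebra_simps)

lemma norm_sym_part_le: "norm (sym_part A) \<le> norm A"
  using norm_triangle_ineq[of A "transpose A"] by (simp add: sym_part_def norm_transpose)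

lemma sym_part_symmetric: "sym_part A $ i $ j = sym_part A $ j $ i"
  by (simp add: sym_part_def transpose_def)

lemma sym_part_eq_self: "(\<And>i j. A $ i $ j = A $ j $ i) \<Longrightarrow> sym_part A = A"
  by (simp add: sym_part_def transpose_def vec_eq_iff)

text \<open>A \<open>C\<^sup>1\<close> substitute for the radial truncation \<open>A \<mapsto> min 1 (k / norm A) *\<^sub>R A\<close>, which
  would destroy the regularity of test fields.\<close>

definition soft_trunc :: "real \<Rightarrow> 'a::real_inner \<Rightarrow> 'a" where
  "soft_trunc k A = (k / sqrt (k\<^sup>2 + A \<bullet> A)) *\<^sub>R A"

lemma soft_trunc_zero [simp]: "soft_trunc k 0 = 0"
  by (simp add: soft_trunc_def)

lemma sqrt_sum_sq_eq_norm_Pair: "sqrt (k\<^sup>2 + A \<bullet> A) = norm (k, A)"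
  by (simp add: norm_Pair power2_norm_eq_inner)

lemma norm_Pair_ge: "\<bar>k\<bar> \<le> norm (k, A)" "norm A \<le> norm (k, A)"
  by (simp_all add: norm_Pair real_le_rsqrt)

lemma soft_trunc_eq: "soft_trunc k A = (k / norm (k, A)) *\<^sub>R A"
  by (simp add: soft_trunc_def sqrt_sum_sq_eq_norm_Pair)

lemma norm_soft_trunc: "0 < k \<Longrightarrow> norm (soft_trunc k A) = k * norm A / norm (k, A)"
  by (simp add: soft_trunc_eq)

lemma norm_soft_trunc_le:
  fixes A :: "'a::real_inner"
  assumes "0 < k"
  shows "norm (soft_trunc k A) \<le> k" and "norm (soft_trunc k A) \<le> norm A"
proof -
  have "0 < norm (k, A)"
    using assms norm_Pair_ge(1)[where k=k and A=A] by linarith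
  then show "norm (soft_trunc k A) \<le> k" "norm (soft_trunc k A) \<le> norm A"
    using assms norm_Pair_ge[where k=k and A=A]
    by (simp_all add: norm_soft_trunc pos_divide_le_eq mult_left_mono)
      (metis mult.commute mult_right_mono norm_ge_zero)
qed

lemma soft_trunc_lipschitz:
  fixes A B :: "'a::real_inner"
  assumes k: "0 < k"
  shows "norm (soft_trunc k A - soft_trunc k B) \<le> 2 * norm (A - B)"
proof -
  define P Q where "P = norm (k, A)" and "Q = norm (k, B)"
  have PQ: "0 < P" "0 < Q" "k \<le> P" "norm B \<le> Q"
    using k norm_Pair_ge[where k=k and A=A] norm_Pair_ge[where k=k and A=B] by (auto simp: P_def Q_def)
  have "\<bar>P - Q\<bar> \<le> norm ((k, A) - (k, B))"
    unfolding P_def Q_def by (rule norm_triangle_ineq3)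
  then have P_Q: "\<bar>P - Q\<bar> \<le> norm (A - B)"
    by (simp add: norm_Pair)
  have decomp: "soft_trunc k A - soft_trunc k B = (k / P) *\<^sub>R (A - B) + (k / P - k / Q) *\<^sub>R B"
    by (simp add: soft_trunc_eq P_def Q_def algebra_simps)
  have "norm ((k / P) *\<^sub>R (A - B)) \<le> norm (A - B)"
    using PQ k by (simp add: pos_divide_le_eq) (metis mult.commute mult_right_mono norm_ge_zero)
  moreover have "k / P - k / Q = (k / P) * ((Q - P) / Q)"
    using PQ by (simp add: field_simps)
  then have "norm ((k / P - k / Q) *\<^sub>R B) = (k / P) * (norm B / Q) * \<bar>P - Q\<bar>"
    using PQ k by (simp add: abs_mult abs_divide abs_minus_commute)
  moreover have "(k / P) * (norm B / Q) * \<bar>P - Q\<bar> \<le> 1 * 1 * norm (A - B)"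
    using PQ k P_Q by (intro mult_mono) auto
  ultimately show ?thesis
    unfolding decomp
    using norm_triangle_ineq[of "(k / P) *\<^sub>R (A - B)" "(k / P - k / Q) *\<^sub>R B"] by linarith
qed

lemma soft_trunc_factor_has_real_derivative:
  assumes pos: "0 < k\<^sup>2 + t"
  shows "((\<lambda>t. k / sqrt (k\<^sup>2 + t)) has_real_derivative - k / (2 * sqrt (k\<^sup>2 + t) * (k\<^sup>2 + t))) (at t)"
proof -
  have "((\<lambda>t. k\<^sup>2 + t) has_real_derivative 1) (at t)"
    using DERIV_add[OF DERIV_const DERIV_ident] by simp
  from DERIV_chain2[OF DERIV_real_sqrt[OF pos] this]
  have "((\<lambda>t. sqrt (k\<^sup>2 + t)) has_real_derivative inverse (sqrt (k\<^sup>2 + t)) / 2) (at t)"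
    by simp
  from DERIV_cmult[OF DERIV_inverse_fun[OF this], of k]
  have "((\<lambda>t. k * inverse (sqrt (k\<^sup>2 + t))) has_real_derivative
          k * - (inverse (sqrt (k\<^sup>2 + t)) / 2 * inverse ((sqrt (k\<^sup>2 + t))\<^sup>2))) (at t)"
    using pos by simp
  moreover have "k * - (inverse (sqrt (k\<^sup>2 + t)) / 2 * inverse ((sqrt (k\<^sup>2 + t))\<^sup>2))
      = - k / (2 * sqrt (k\<^sup>2 + t) * (k\<^sup>2 + t))"
  proof -
    have "(sqrt (k\<^sup>2 + t))\<^sup>2 = k\<^sup>2 + t"
      using pos by simp
    then show ?thesis
      by (simp add: field_simps)
  qed
  ultimately show ?thesis
    by (simp only: divide_inverse)
qed

lemma C1_soft_trunc_comp:
  fixes G :: "'a::real_normed_vector \<Rightarrow> 'b::real_inner"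
  assumes "C1 G" "0 < k"
  shows "C1 (\<lambda>x. soft_trunc k (G x))"
proof -
  have pos: "0 < k\<^sup>2 + t" if "t \<in> {0..}" for t
    using that \<open>0 < k\<close> by (simp add: add_pos_nonneg)
  have "C1 (\<lambda>x. k / sqrt (k\<^sup>2 + G x \<bullet> G x))"
  proof (rule C1_real_comp[where a="\<lambda>x. G x \<bullet> G x" and \<sigma>="\<lambda>t. k / sqrt (k\<^sup>2 + t)"])
    show "C1 (\<lambda>x. G x \<bullet> G x)"
      by (rule C1_inner[OF \<open>C1 G\<close> \<open>C1 G\<close>])
    show "G x \<bullet> G x \<in> {0..}" for x
      by simp
    show "((\<lambda>t. k / sqrt (k\<^sup>2 + t)) has_real_derivative - k / (2 * sqrt (k\<^sup>2 + t) * (k\<^sup>2 + t))) (at t)"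
      if "t \<in> {0..}" for t
      using pos[OF that] by (rule soft_trunc_factor_has_real_derivative)
    have "2 * sqrt (k\<^sup>2 + t) * (k\<^sup>2 + t) \<noteq> 0" if "t \<in> {0..}" for t
      using pos[OF that] by simp
    then show "continuous_on {0..} (\<lambda>t. - k / (2 * sqrt (k\<^sup>2 + t) * (k\<^sup>2 + t)))"
      by (intro continuous_intros) auto
  qed
  then show ?thesis
    unfolding soft_trunc_def using \<open>C1 G\<close> by (rule C1_scaleR)
qed

lemma sym_part_soft_trunc_dist_le:
  assumes "0 < k" "\<And>i j. A $ i $ j = A $ j $ i"
  shows "norm (soft_trunc k (sym_part B) - soft_trunc k A) \<le> 2 * norm (A - B)"
proof -
  have "norm (soft_trunc k (sym_part B) - soft_trunc k (sym_part A)) \<le> 2 * norm (sym_part B - sym_part A)"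
    using \<open>0 < k\<close> by (rule soft_trunc_lipschitz)
  also have "sym_part B - sym_part A = sym_part (B - A)"
    by (simp add: linear_diff[OF bounded_linear.linear[OF bounded_linear_sym_part]])
  also have "norm (sym_part (B - A)) \<le> norm (A - B)"
    using norm_sym_part_le[of "B - A"] by (simp add: norm_minus_commute)
  finally show ?thesis
    using sym_part_eq_self[of A] assms(2) by simp
qed

section \<open>Small Luxemburg norm forces small integrals\<close>

lemma integrable_bounded_by_mult:
  fixes F :: "'a \<Rightarrow> real"
  assumes "integrable M g" "F \<in> borel_measurable M" "\<And>x. \<bar>F x\<bar> \<le> B * g x"
  shows "integrable M F"
  by (rule Bochner_Integration.integrable_bound[OF integrable_mult_right[of B, OF assms(1)] assms(2)])
     (auto intro: order_trans[OF assms(3) abs_ge_self])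

lemma nn_integral_le_if_tendsto:
  fixes h :: "nat \<Rightarrow> 'a \<Rightarrow> ennreal"
  assumes "\<And>j. h j \<in> borel_measurable M" "\<And>x. x \<in> space M \<Longrightarrow> (\<lambda>j. h j x) \<longlonglongrightarrow> g x"
    and "\<And>j. (\<integral>\<^sup>+ x. h j x \<partial>M) \<le> B"
  shows "(\<integral>\<^sup>+ x. g x \<partial>M) \<le> B"
proof -
  have "(\<integral>\<^sup>+ x. g x \<partial>M) = (\<integral>\<^sup>+ x. liminf (\<lambda>j. h j x) \<partial>M)"
    using assms(2) by (intro nn_integral_cong) (simp add: lim_imp_Liminf[symmetric])
  also have "\<dots> \<le> liminf (\<lambda>j. \<integral>\<^sup>+ x. h j x \<partial>M)"
    using assms(1) by (rule nn_integral_liminf)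
  also have "\<dots> \<le> limsup (\<lambda>j. \<integral>\<^sup>+ x. h j x \<partial>M)"
    by (rule Liminf_le_Limsup) simp
  also have "\<dots> \<le> B"
    using assms(3) by (intro Limsup_bounded always_eventually) auto
  finally show ?thesis .
qed

lemma integral_tail_tendsto_0:
  fixes W :: "'a \<Rightarrow> real"
  assumes "integrable M W" "\<And>x. 0 \<le> W x"
  shows "(\<lambda>n. \<integral>x. max (W x - real n) 0 \<partial>M) \<longlonglongrightarrow> 0"
proof -
  have "(\<lambda>n. \<integral>x. max (W x - real n) 0 \<partial>M) \<longlonglongrightarrow> (\<integral>x. 0 \<partial>M)"
  proof (rule integral_dominated_convergence[where w=W])
    show "AE x in M. (\<lambda>n. max (W x - real n) 0) \<longlonglongrightarrow> 0"
    proof (rule AE_I2)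
      fix x
      obtain n0 :: nat where "W x < real n0"
        using reals_Archimedean2 by blast
      then have "\<forall>\<^sub>F n in sequentially. max (W x - real n) 0 = 0"
        unfolding eventually_sequentially
        by (intro exI[of _ n0]) (auto dest: order.strict_trans2[OF _ of_nat_mono])
      then show "(\<lambda>n. max (W x - real n) 0) \<longlonglongrightarrow> 0"
        by (rule tendsto_eventually)
    qed
  qed (use assms in auto)
  then show ?thesis
    by simp
qed

lemma integral_absolutely_continuous:
  fixes W :: "'a \<Rightarrow> real"
  assumes W: "integrable M W" "\<And>x. 0 \<le> W x" and "0 < \<epsilon>"
  obtains \<rho> where "0 < \<rho>"
    "\<And>A. A \<in> sets M \<Longrightarrow> emeasure M A < ennreal \<rho> \<Longrightarrow> (\<integral>x. indicator A x * W x \<partial>M) \<le> \<epsilon>"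
proof -
  define tail where "tail n x = max (W x - real n) 0" for n :: nat and x
  have tail_int: "integrable M (tail n)" for n
  proof (rule Bochner_Integration.integrable_bound[OF W(1)])
    show "tail n \<in> borel_measurable M"
      unfolding tail_def[abs_def] using W(1) by measurable
  qed (use W(2) in \<open>auto simp: tail_def\<close>)
  have "\<forall>\<^sub>F n in sequentially. (\<integral>x. tail n x \<partial>M) < \<epsilon> / 2"
    unfolding tail_def using integral_tail_tendsto_0[OF W] \<open>0 < \<epsilon>\<close> by (intro order_tendstoD(2)) auto
  then obtain N where N: "(\<integral>x. tail N x \<partial>M) < \<epsilon> / 2"
    by (auto simp: eventually_sequentially)
  show ?thesis
  proof (rule that[of "\<epsilon> / (2 * (real N + 1))"])
    show "0 < \<epsilon> / (2 * (real N + 1))"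
      using \<open>0 < \<epsilon>\<close> by simp
    fix A assume A: "A \<in> sets M" "emeasure M A < ennreal (\<epsilon> / (2 * (real N + 1)))"
    then have "emeasure M A < \<infinity>" and measure_A: "measure M A \<le> \<epsilon> / (2 * (real N + 1))"
      using \<open>0 < \<epsilon>\<close> by (auto simp: measure_def enn2real_leI less_imp_le top.not_eq_extremum
          dest: order.strict_trans[OF _ ennreal_less_top])
    then have ind_int: "integrable M (indicator A :: 'a \<Rightarrow> real)"
      using A(1) by simp
    have "indicator A x * W x \<le> real N * indicator A x + tail N x" for x
      by (auto simp: tail_def indicator_def W(2))
    moreover have "integrable M (\<lambda>x. indicator A x * W x)"
      using integrable_real_mult_indicator[OF A(1) W(1)] by (simp add: mult.commute)
    ultimately have "(\<integral>x. indicator A x * W x \<partial>M) \<le> (\<integral>x. real N * indicator A x + tail N x \<partial>M)"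
      using ind_int tail_int by (intro integral_mono) auto
    also have "\<dots> = real N * measure M A + (\<integral>x. tail N x \<partial>M)"
      using ind_int tail_int A(1) by simp
    also have "real N * measure M A \<le> \<epsilon> / 2"
    proof -
      have "real N * measure M A \<le> real N * (\<epsilon> / (2 * (real N + 1)))"
        using measure_A by (intro mult_left_mono) auto
      also have "\<dots> \<le> \<epsilon> / 2"
        using \<open>0 < \<epsilon>\<close> by (simp add: field_simps)
      finally show ?thesis .
    qed
    finally show "(\<integral>x. indicator A x * W x \<partial>M) \<le> \<epsilon>"
      using N by simp
  qed
qed

lemma sets_lebesgue_on_compact_Collect:
  assumes "\<Omega> \<in> sets lebesgue" "compact K" "K \<subseteq> \<Omega>"
    and "{x \<in> space (lebesgue_on \<Omega>). P x} \<in> sets (lebesgue_on \<Omega>)"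
  shows "{x \<in> K. P x} \<in> sets (lebesgue_on \<Omega>)"
proof -
  have "K \<in> sets (lebesgue_on \<Omega>)"
    using assms(1-3) by (simp add: sets_restrict_space_iff compact_imp_closed)
  then have "{x \<in> space (lebesgue_on \<Omega>). P x} \<inter> K \<in> sets (lebesgue_on \<Omega>)"
    using assms(4) by blast
  moreover have "{x \<in> space (lebesgue_on \<Omega>). P x} \<inter> K = {x \<in> K. P x}"
    using assms(3) by auto
  ultimately show ?thesis
    by simp
qed

lemma conj_Phi_sublevel_measure_small:
  assumes wp: "weak_Phi \<Omega> \<phi>" and \<Omega>: "\<Omega> \<in> sets lebesgue"
    and K: "compact K" "K \<subseteq> \<Omega>" and "0 < \<rho>"
  obtains j :: nat
  where "emeasure (lebesgue_on \<Omega>) {x \<in> K. conj_Phi \<phi> x (real j) \<le> ennreal R} < ennreal \<rho>"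
proof -
  let ?M = "lebesgue_on \<Omega>"
  define D where "D j = {x \<in> K. conj_Phi \<phi> x (real j) \<le> ennreal R}" for j
  have D_sets: "D j \<in> sets ?M" for j
  proof -
    have [measurable]: "(\<lambda>x. conj_Phi \<phi> x (real j)) \<in> borel_measurable ?M"
      by (rule measurable_conj_Phi[OF wp]) auto
    show ?thesis
      unfolding D_def by (intro sets_lebesgue_on_compact_Collect[OF \<Omega> K]) measurable
  qed
  have "decseq D"
  proof (rule decseq_SucI)
    show "D (Suc j) \<subseteq> D j" for j
      using conj_Phi_mono[of "real j" "real (Suc j)" \<phi>] by (auto simp: D_def intro: order_trans)
  qed
  moreover have "emeasure ?M (D j) \<noteq> \<infinity>" for j
  proof -
    have "emeasure ?M (D j) \<le> emeasure ?M K"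
      using D_sets[of j] sets.sets_into_space[OF D_sets[of j]] K \<Omega>
      by (intro emeasure_mono) (auto simp: D_def sets_restrict_space_iff compact_imp_closed)
    also have "\<dots> = emeasure lebesgue K"
      using K \<Omega> by (intro emeasure_restrict_space) auto
    also have "\<dots> < \<infinity>"
      using K(1) by (metis fmeasurableD2 infinity_ennreal_def lmeasurable_compact top.not_eq_extremum)
    finally show ?thesis by simp
  qed
  moreover have "(\<Inter>j. D j) = {}"
  proof -
    have "\<exists>j. x \<notin> D j" if "x \<in> K" for x
    proof -
      have "((\<phi> x) \<longlongrightarrow> 0) (at_right 0)"
        using wp K that unfolding weak_Phi_def by blast
      then obtain j :: nat where "ennreal R < conj_Phi \<phi> x (real j)"
        by (rule conj_Phi_unbounded)
      then show ?thesis
        by (auto simp: D_def not_le)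
    qed
    then show ?thesis
      by (auto simp: D_def)
  qed
  ultimately have "(\<lambda>j. emeasure ?M (D j)) \<longlonglongrightarrow> 0"
    using Lim_emeasure_decseq[of D ?M] D_sets by auto
  then have "\<forall>\<^sub>F j in sequentially. emeasure ?M (D j) < ennreal \<rho>"
    using \<open>0 < \<rho>\<close> by (intro order_tendstoD(2)) auto
  then show ?thesis
    using that by (auto simp: D_def eventually_sequentially)
qed

lemma conj_Phi_superlevel_measure_le:
  assumes wp: "weak_Phi \<Omega> \<phi>" and \<Omega>: "\<Omega> \<in> sets lebesgue"
    and h: "h \<in> borel_measurable (lebesgue_on \<Omega>)" and "0 < r"
    and modular: "(\<integral>\<^sup>+ x\<in>\<Omega>. conj_Phi \<phi> x (\<bar>h x\<bar> / r) \<partial>lebesgue) \<le> 1"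
  shows "emeasure (lebesgue_on \<Omega>) {x \<in> \<Omega>. 1 \<le> ennreal c * conj_Phi \<phi> x (\<bar>h x\<bar> / r)} \<le> ennreal c"
proof -
  let ?M = "lebesgue_on \<Omega>"
  define u where "u x = conj_Phi \<phi> x (\<bar>h x\<bar> / r)" for x
  have [measurable]: "u \<in> borel_measurable ?M" "\<Omega> \<in> sets ?M"
    unfolding u_def using h \<open>0 < r\<close> sets.top[of ?M] by (auto intro: measurable_conj_Phi[OF wp])
  have "emeasure ?M {x \<in> \<Omega>. 1 \<le> ennreal c * u x} \<le> ennreal c * (\<integral>\<^sup>+ x. u x * indicator \<Omega> x \<partial>?M)"
    by (rule nn_integral_Markov_inequality) measurable
  also have "(\<integral>\<^sup>+ x. u x * indicator \<Omega> x \<partial>?M) = (\<integral>\<^sup>+ x. u x \<partial>?M)"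
    by (rule nn_integral_cong) simp
  also have "\<dots> \<le> 1"
    using modular \<Omega> by (simp add: u_def nn_integral_restrict_space)
  finally show ?thesis
    by (simp add: u_def mult_left_mono)
qed

text \<open>Off a subset of \<open>K\<close> of measure below \<open>\<rho> / 2\<close>, \<open>conj_Phi \<phi> x j\<close> is large; there
  \<open>\<bar>h x\<bar> > \<delta>\<close> makes the modular integrand of \<open>h\<close> large, which by Markov's inequality happens
  only on a set of measure at most \<open>\<rho> / 2\<close>.\<close>

lemma lux_small_imp_superlevel_small:
  assumes wp: "weak_Phi \<Omega> \<phi>" and \<Omega>: "\<Omega> \<in> sets lebesgue"
    and K: "compact K" "K \<subseteq> \<Omega>" and "0 < \<delta>" "0 < \<rho>"
  obtains \<eta> where "0 < \<eta>"
    "\<And>h. h \<in> borel_measurable (lebesgue_on \<Omega>) \<Longrightarrow> lux \<Omega> (conj_Phi \<phi>) h < ennreal \<eta> \<Longrightarrow>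
        emeasure (lebesgue_on \<Omega>) {x \<in> K. \<delta> < \<bar>h x\<bar>} < ennreal \<rho>"
proof -
  let ?M = "lebesgue_on \<Omega>"
  define c where "c = \<rho> / 2"
  have c: "0 < c" "ennreal c * ennreal (1 / c) = 1" "ennreal c + ennreal c = ennreal \<rho>"
    using \<open>0 < \<rho>\<close> by (simp_all add: c_def flip: ennreal_mult ennreal_plus)
  obtain j :: nat where j: "emeasure ?M {x \<in> K. conj_Phi \<phi> x (real j) \<le> ennreal (1 / c)} < ennreal c"
    using conj_Phi_sublevel_measure_small[OF wp \<Omega> K c(1)] by blast
  define D where "D = {x \<in> K. conj_Phi \<phi> x (real j) \<le> ennreal (1 / c)}"
  have D_sets: "D \<in> sets ?M"
  proof -
    have [measurable]: "(\<lambda>x. conj_Phi \<phi> x (real j)) \<in> borel_measurable ?M"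
      by (rule measurable_conj_Phi[OF wp]) auto
    show ?thesis
      unfolding D_def by (intro sets_lebesgue_on_compact_Collect[OF \<Omega> K]) measurable
  qed
  show ?thesis
  proof (rule that)
    show "0 < \<delta> / (real j + 1)"
      using \<open>0 < \<delta>\<close> by simp
    fix h assume h: "h \<in> borel_measurable ?M" "lux \<Omega> (conj_Phi \<phi>) h < ennreal (\<delta> / (real j + 1))"
    obtain r where r: "0 < r" "r < \<delta> / (real j + 1)"
      and modular: "(\<integral>\<^sup>+ x\<in>\<Omega>. conj_Phi \<phi> x (\<bar>h x\<bar> / r) \<partial>lebesgue) \<le> 1"
      using h(2) by (rule lux_lessE)
    define E where "E = {x \<in> \<Omega>. 1 \<le> ennreal c * conj_Phi \<phi> x (\<bar>h x\<bar> / r)}"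
    have E_sets: "E \<in> sets ?M"
    proof -
      have [measurable]: "(\<lambda>x. conj_Phi \<phi> x (\<bar>h x\<bar> / r)) \<in> borel_measurable ?M"
        using h(1) r(1) by (intro measurable_conj_Phi[OF wp]) auto
      have "{x \<in> space ?M. 1 \<le> ennreal c * conj_Phi \<phi> x (\<bar>h x\<bar> / r)} \<in> sets ?M"
        by measurable
      then show ?thesis
        by (simp add: E_def)
    qed
    have "{x \<in> K. \<delta> < \<bar>h x\<bar>} \<subseteq> D \<union> E"
    proof
      fix x assume x: "x \<in> {x \<in> K. \<delta> < \<bar>h x\<bar>}"
      show "x \<in> D \<union> E"
      proof (cases "x \<in> D")
        case False
        have "real j \<le> \<delta> / (\<delta> / (real j + 1))"
          using \<open>0 < \<delta>\<close> by simp
        also have "\<dots> \<le> \<bar>h x\<bar> / r"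
          using x r \<open>0 < \<delta>\<close> by (intro frac_le) auto
        finally have "ennreal (1 / c) \<le> conj_Phi \<phi> x (\<bar>h x\<bar> / r)"
          using False x conj_Phi_mono[of "real j" "\<bar>h x\<bar> / r" \<phi> x] unfolding D_def by auto
        then have "1 \<le> ennreal c * conj_Phi \<phi> x (\<bar>h x\<bar> / r)"
          using c(2) mult_left_mono[of "ennreal (1 / c)" _ "ennreal c"] by simp
        then show ?thesis
          using x K by (auto simp: E_def)
      qed simp
    qed
    then have "emeasure ?M {x \<in> K. \<delta> < \<bar>h x\<bar>} \<le> emeasure ?M D + emeasure ?M E"
      using D_sets E_sets by (meson emeasure_mono emeasure_subadditive sets.Un order_trans)
    also have "\<dots> \<le> emeasure ?M D + ennreal c"
      unfolding E_def using conj_Phi_superlevel_measure_le[OF wp \<Omega> h(1) r(1) modular]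
      by (rule add_left_mono)
    also have "\<dots> < ennreal c + ennreal c"
      using j ennreal_add_left_cancel_less[of "ennreal c" "emeasure ?M D" "ennreal c"]
      by (simp add: D_def add.commute)
    finally show "emeasure ?M {x \<in> K. \<delta> < \<bar>h x\<bar>} < ennreal \<rho>"
      using c(3) by simp
  qed
qed

lemma lux_small_imp_integral_small:
  assumes wp: "weak_Phi \<Omega> \<phi>" and \<Omega>: "\<Omega> \<in> sets lebesgue" and K: "compact K" "K \<subseteq> \<Omega>"
    and W: "W \<in> borel_measurable (lebesgue_on \<Omega>)" "\<And>x. 0 \<le> W x"
    and W_int: "integrable (lebesgue_on \<Omega>) (\<lambda>x. indicator K x * W x)"
    and "0 \<le> C" "0 < \<epsilon>"
  obtains \<eta> where "0 < \<eta>"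
    "\<And>a. a \<in> borel_measurable (lebesgue_on \<Omega>) \<Longrightarrow> (\<And>x. 0 \<le> a x) \<Longrightarrow> (\<And>x. a x \<le> C) \<Longrightarrow>
       (\<And>x. x \<notin> K \<Longrightarrow> a x = 0) \<Longrightarrow> lux \<Omega> (conj_Phi \<phi>) a < ennreal \<eta> \<Longrightarrow>
       (\<integral>x. a x * W x \<partial>lebesgue_on \<Omega>) \<le> \<epsilon>"
proof -
  let ?M = "lebesgue_on \<Omega>"
  define I where "I = (\<integral>x. indicator K x * W x \<partial>?M)"
  define \<delta> where "\<delta> = \<epsilon> / (2 * (I + 1))"
  have "0 \<le> I"
    unfolding I_def using W(2) by (simp add: integral_nonneg)
  then have \<delta>: "0 < \<delta>" "\<delta> * I \<le> \<epsilon> / 2"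
    using \<open>0 < \<epsilon>\<close> by (simp_all add: \<delta>_def field_simps)
  obtain \<rho> where "0 < \<rho>" and \<rho>: "\<And>A. A \<in> sets ?M \<Longrightarrow> emeasure ?M A < ennreal \<rho> \<Longrightarrow>
      (\<integral>x. indicator A x * (indicator K x * W x) \<partial>?M) \<le> \<epsilon> / (2 * (C + 1))"
    using integral_absolutely_continuous[OF W_int _, of "\<epsilon> / (2 * (C + 1))"] W(2) \<open>0 \<le> C\<close> \<open>0 < \<epsilon>\<close>
    by (auto simp: indicator_def)
  obtain \<eta> where "0 < \<eta>" and \<eta>: "\<And>h. h \<in> borel_measurable ?M \<Longrightarrow> lux \<Omega> (conj_Phi \<phi>) h < ennreal \<eta> \<Longrightarrow>
      emeasure ?M {x \<in> K. \<delta> < \<bar>h x\<bar>} < ennreal \<rho>"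
    using lux_small_imp_superlevel_small[OF wp \<Omega> K \<delta>(1) \<open>0 < \<rho>\<close>] by blast
  show ?thesis
  proof (rule that[OF \<open>0 < \<eta>\<close>])
    fix a assume a: "a \<in> borel_measurable ?M" "\<And>x. 0 \<le> a x" "\<And>x. a x \<le> C"
      "\<And>x. x \<notin> K \<Longrightarrow> a x = 0" "lux \<Omega> (conj_Phi \<phi>) a < ennreal \<eta>"
    define A where "A = {x \<in> K. \<delta> < \<bar>a x\<bar>}"
    have A_sets: "A \<in> sets ?M"
      unfolding A_def using a(1) by (intro sets_lebesgue_on_compact_Collect[OF \<Omega> K]) measurable
    have pointwise: "a x * W x \<le> \<delta> * (indicator K x * W x) + C * (indicator A x * (indicator K x * W x))"
      for x
    proof (cases "x \<in> K \<and> a x \<le> \<delta>")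
      case True
      then show ?thesis
        using mult_right_mono[of "a x" \<delta> "W x"] W(2)[of x] \<open>0 \<le> C\<close>
        by (simp add: indicator_def add_increasing2)
    next
      case False
      then show ?thesis
        using mult_right_mono[OF a(3)[of x] W(2)[of x]] a(2,4)[of x] W(2)[of x] \<delta>(1) \<open>0 \<le> C\<close>
        by (auto simp: A_def indicator_def add_increasing)
    qed
    have "integrable ?M (\<lambda>x. a x * W x)"
    proof (rule integrable_bounded_by_mult[OF W_int _, of _ C])
      show "(\<lambda>x. a x * W x) \<in> borel_measurable ?M"
        using a(1) W(1) by measurable
      show "\<bar>a x * W x\<bar> \<le> C * (indicator K x * W x)" for x
        using mult_right_mono[OF a(3)[of x] W(2)[of x]] a(2,4)[of x] W(2)[of x]
        by (cases "x \<in> K") (auto simp: abs_mult)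
    qed
    moreover have A_int: "integrable ?M (\<lambda>x. indicator A x * (indicator K x * W x))"
      using integrable_real_mult_indicator[OF A_sets W_int] by (simp add: mult.commute)
    ultimately have "(\<integral>x. a x * W x \<partial>?M)
        \<le> (\<integral>x. \<delta> * (indicator K x * W x) + C * (indicator A x * (indicator K x * W x)) \<partial>?M)"
      using W_int pointwise by (intro integral_mono) auto
    also have "\<dots> = \<delta> * I + C * (\<integral>x. indicator A x * (indicator K x * W x) \<partial>?M)"
      using W_int A_int by (simp add: I_def)
    also have "\<dots> \<le> \<epsilon> / 2 + C * (\<epsilon> / (2 * (C + 1)))"
      using \<delta>(2) \<rho>[OF A_sets \<eta>[OF a(1) a(5), folded A_def]] \<open>0 \<le> C\<close>
      by (intro add_mono mult_left_mono) auto
    also have "\<dots> \<le> \<epsilon>"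
      using \<open>0 \<le> C\<close> \<open>0 < \<epsilon>\<close> by (simp add: field_simps)
    finally show "(\<integral>x. a x * W x \<partial>?M) \<le> \<epsilon>" .
  qed
qed

section \<open>The variation against the associate norm\<close>

lemma C1c_iff:
  "\<psi> \<in> C1c \<Omega> \<longleftrightarrow> C1 \<psi> \<and> compact (closure {x. \<psi> x \<noteq> 0}) \<and> closure {x. \<psi> x \<noteq> 0} \<subseteq> \<Omega>"
  unfolding C1c_def support_in_def Ck_1_iff_C1 by auto

lemma C1c_supported_in_compact:
  assumes "C1 \<psi>" "{x. \<psi> x \<noteq> 0} \<subseteq> K" "compact K" "K \<subseteq> \<Omega>"
  shows "\<psi> \<in> C1c \<Omega>"
proof -
  have "closure {x. \<psi> x \<noteq> 0} \<subseteq> K"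
    using assms(2,3) by (simp add: closure_minimal compact_imp_closed)
  then show ?thesis
    using assms by (auto simp: C1c_iff intro: compact_closure[THEN iffD2] bounded_subset compact_imp_bounded)
qed

lemma Vtilde_le_assoc_norm:
  assumes "open \<Omega>"
  shows "Vtilde \<Omega> \<phi> w \<le> enn2ereal (assoc_norm \<Omega> \<phi> w)"
  unfolding Vtilde_def
proof (rule SUP_least)
  fix \<psi> assume \<psi>: "\<psi> \<in> {\<psi>. \<psi> \<in> C1c \<Omega> \<and> sym_field \<psi> \<and> mnorm_conj \<Omega> \<phi> \<psi> \<le> 1}"
  let ?M = "lebesgue_on \<Omega>"
  have frob_le: "\<bar>\<psi> x \<bar>:\<bar> w x\<bar> \<le> norm (w x) * \<bar>norm (\<psi> x)\<bar>" for x
    unfolding frob_eq_inner using Cauchy_Schwarz_ineq2[of "\<psi> x" "w x"] by (simp add: mult.commute)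
  have "ereal (\<integral>x. \<psi> x \<bar>:\<bar> w x \<partial>?M) \<le> enn2ereal (\<integral>\<^sup>+ x. ennreal (norm (w x) * \<bar>norm (\<psi> x)\<bar>) \<partial>?M)"
  proof (cases "integrable ?M (\<lambda>x. \<psi> x \<bar>:\<bar> w x)")
    case True
    have "(\<integral>x. \<psi> x \<bar>:\<bar> w x \<partial>?M) \<le> (\<integral>x. \<bar>\<psi> x \<bar>:\<bar> w x\<bar> \<partial>?M)"
      using True by (intro integral_mono) auto
    then have "ereal (\<integral>x. \<psi> x \<bar>:\<bar> w x \<partial>?M) \<le> enn2ereal (\<integral>\<^sup>+ x. ennreal \<bar>\<psi> x \<bar>:\<bar> w x\<bar> \<partial>?M)"
      using True by (simp add: nn_integral_eq_integral integral_nonneg)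
    also have "\<dots> \<le> enn2ereal (\<integral>\<^sup>+ x. ennreal (norm (w x) * \<bar>norm (\<psi> x)\<bar>) \<partial>?M)"
      unfolding less_eq_ennreal.rep_eq[symmetric] using frob_le by (intro nn_integral_mono ennreal_leI)
    finally show ?thesis .
  qed (simp add: not_integrable_integral_eq enn2ereal_nonneg flip: zero_ereal_def)
  also have "\<dots> \<le> enn2ereal (assoc_norm \<Omega> \<phi> w)"
    unfolding less_eq_ennreal.rep_eq[symmetric] assoc_norm_def
  proof (rule SUP_upper2[where i="\<lambda>x. norm (\<psi> x)"])
    have "continuous_on UNIV \<psi>"
      using \<psi> by (simp add: C1c_iff C1_imp_continuous_on)
    then have "continuous_on \<Omega> (\<lambda>x. norm (\<psi> x))"
      by (intro continuous_on_norm) (rule continuous_on_subset, auto)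
    then show "(\<lambda>x. norm (\<psi> x)) \<in> {v \<in> borel_measurable ?M. lux \<Omega> (conj_Phi \<phi>) v \<le> 1}"
      using \<psi> \<open>open \<Omega>\<close> by (auto simp: mnorm_conj_def intro: continuous_imp_measurable_on_sets_lebesgue)
  qed (use \<open>open \<Omega>\<close> in \<open>simp add: nn_integral_restrict_space\<close>)
  finally show "ereal (\<integral>x. \<psi> x \<bar>:\<bar> w x \<partial>?M) \<le> enn2ereal (assoc_norm \<Omega> \<phi> w)" .
qed

lemma zero_in_Vtilde_set:
  "(\<lambda>x. 0) \<in> {\<psi>. \<psi> \<in> C1c \<Omega> \<and> sym_field \<psi> \<and> mnorm_conj \<Omega> \<phi> \<psi> \<le> 1}"
  using lux_conj_Phi_zero_le[of \<Omega> \<phi>] by (simp add: C1c_iff C1_const sym_field_def mnorm_conj_def)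

lemma Vtilde_nonneg: "0 \<le> Vtilde \<Omega> \<phi> w"
proof -
  have "ereal (\<integral>x. (\<lambda>x. 0) x \<bar>:\<bar> w x \<partial>lebesgue_on \<Omega>) \<le> Vtilde \<Omega> \<phi> w"
    unfolding Vtilde_def by (rule SUP_upper[OF zero_in_Vtilde_set])
  then show ?thesis
    by (simp add: frob_def zero_ereal_def)
qed

lemma integral_frob_le_Vtilde:
  assumes "Vtilde \<Omega> \<phi> w = ereal m" and \<psi>: "\<psi> \<in> C1c \<Omega>" "sym_field \<psi>"
    and "0 < c" and "mnorm_conj \<Omega> \<phi> \<psi> \<le> ennreal c"
  shows "(\<integral>x. \<psi> x \<bar>:\<bar> w x \<partial>lebesgue_on \<Omega>) \<le> m * c"
proof -
  define \<psi>' where "\<psi>' x = (1 / c) *\<^sub>R \<psi> x" for x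
  have "\<psi>' \<in> C1c \<Omega>"
    using \<psi>(1) \<open>0 < c\<close> unfolding \<psi>'_def
    by (intro C1c_supported_in_compact[where K="closure {x. \<psi> x \<noteq> 0}"] C1_scale)
       (auto simp: C1c_iff intro: closure_subset[THEN subsetD])
  moreover have "sym_field \<psi>'"
    using \<psi>(2) by (simp add: sym_field_def \<psi>'_def)
  moreover have "mnorm_conj \<Omega> \<phi> \<psi>' \<le> ennreal (1 / c) * mnorm_conj \<Omega> \<phi> \<psi>"
    unfolding mnorm_conj_def using \<open>0 < c\<close> by (intro lux_scale_le mono_conj_Phi) (auto simp: \<psi>'_def)
  then have "mnorm_conj \<Omega> \<phi> \<psi>' \<le> 1"
    using \<open>0 < c\<close> \<open>mnorm_conj \<Omega> \<phi> \<psi> \<le> ennreal c\<close> mult_left_mono[of _ "ennreal c" "ennreal (1 / c)"]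
    by (auto simp: ennreal_mult[symmetric] simp del: ennreal_mult intro: order_trans)
  ultimately have "ereal (\<integral>x. \<psi>' x \<bar>:\<bar> w x \<partial>lebesgue_on \<Omega>) \<le> Vtilde \<Omega> \<phi> w"
    unfolding Vtilde_def by (intro SUP_upper) auto
  then show ?thesis
    using \<open>0 < c\<close> assms(1) by (simp add: \<psi>'_def frob_eq_inner field_simps)
qed

definition C1c_dense :: "(real^'n) set \<Rightarrow> (real^'n \<Rightarrow> real \<Rightarrow> ennreal) \<Rightarrow> bool" where
  "C1c_dense \<Omega> \<phi> \<longleftrightarrow>
     (\<forall>f\<in>L_conj \<Omega> \<phi>. \<forall>\<epsilon>>0. \<exists>\<psi>\<in>C1c \<Omega>. mnorm_conj \<Omega> \<phi> (\<lambda>x. f x - \<psi> x) < ennreal \<epsilon>)"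

text \<open>The approximants given by density need neither be symmetric nor bounded nor supported in a
  fixed compact set; symmetrising, truncating and cutting off repairs this at the price of a
  factor 2 in the distance.\<close>

lemma C1c_dense_imp_truncated_approx:
  fixes \<theta> :: "real^'n \<Rightarrow> real"
  assumes dense: "C1c_dense \<Omega> \<phi>"
    and f: "f \<in> L_conj \<Omega> \<phi>" "\<And>x i j. f x $ i $ j = f x $ j $ i" "\<And>x. x \<notin> K \<Longrightarrow> f x = 0"
    and \<theta>: "C1 \<theta>" "\<And>x. 0 \<le> \<theta> x" "\<And>x. \<theta> x \<le> 1" "\<And>x. x \<in> K \<Longrightarrow> \<theta> x = 1"
      "compact (closure {x. \<theta> x \<noteq> 0})" "closure {x. \<theta> x \<noteq> 0} \<subseteq> \<Omega>"
    and "0 < k" "0 < \<epsilon>"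
  obtains \<Psi> where "\<Psi> \<in> C1c \<Omega>" "sym_field \<Psi>" "\<And>x. norm (\<Psi> x) \<le> k" "\<And>x. \<theta> x = 0 \<Longrightarrow> \<Psi> x = 0"
    "mnorm_conj \<Omega> \<phi> (\<lambda>x. \<Psi> x - soft_trunc k (f x)) < ennreal \<epsilon>"
proof -
  obtain \<psi> where \<psi>: "\<psi> \<in> C1c \<Omega>" "mnorm_conj \<Omega> \<phi> (\<lambda>x. f x - \<psi> x) < ennreal (\<epsilon> / 2)"
    using dense f(1) \<open>0 < \<epsilon>\<close> unfolding C1c_dense_def by (meson half_gt_zero)
  define \<Psi> where "\<Psi> x = \<theta> x *\<^sub>R soft_trunc k (sym_part (\<psi> x))" for x
  have "C1 \<Psi>"
    using \<psi>(1) unfolding \<Psi>_def C1c_iff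
    by (intro C1_scaleR \<theta>(1) C1_soft_trunc_comp \<open>0 < k\<close> C1_bounded_linear_comp[OF bounded_linear_sym_part])
       simp
  then have "\<Psi> \<in> C1c \<Omega>"
    using \<theta>(5,6) closure_subset[of "{x. \<theta> x \<noteq> 0}"]
    by (intro C1c_supported_in_compact) (auto simp: \<Psi>_def)
  moreover have "sym_field \<Psi>"
    by (simp add: sym_field_def \<Psi>_def soft_trunc_def sym_part_symmetric)
  moreover have "norm (\<Psi> x) \<le> k" for x
    using \<theta>(2,3)[of x] norm_soft_trunc_le(1)[OF \<open>0 < k\<close>, of "sym_part (\<psi> x)"]
    by (simp add: \<Psi>_def) (meson mult_left_le_one_le norm_ge_zero order_trans)
  moreover have "\<theta> x = 0 \<Longrightarrow> \<Psi> x = 0" for x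
    by (simp add: \<Psi>_def)
  moreover have pointwise: "norm (\<Psi> x - soft_trunc k (f x)) \<le> 2 * norm (f x - \<psi> x)" for x
  proof (cases "x \<in> K")
    case True
    then show ?thesis
      using sym_part_soft_trunc_dist_le[OF \<open>0 < k\<close> f(2)] by (simp add: \<Psi>_def \<theta>(4))
  next
    case False
    have "norm (\<Psi> x) \<le> norm (\<psi> x)"
      using \<theta>(2,3)[of x] norm_soft_trunc_le(2)[OF \<open>0 < k\<close>, of "sym_part (\<psi> x)"]
        norm_sym_part_le[of "\<psi> x"]
      by (simp add: \<Psi>_def) (meson mult_left_le_one_le norm_ge_zero order_trans)
    then have "norm (\<Psi> x) \<le> 2 * norm (\<psi> x)"
      by (smt (verit) norm_ge_zero)
    then show ?thesis
      using f(3)[OF False] by simp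
  qed
  moreover have "mnorm_conj \<Omega> \<phi> (\<lambda>x. \<Psi> x - soft_trunc k (f x)) < ennreal \<epsilon>"
  proof -
    have "mnorm_conj \<Omega> \<phi> (\<lambda>x. \<Psi> x - soft_trunc k (f x)) \<le> ennreal 2 * mnorm_conj \<Omega> \<phi> (\<lambda>x. f x - \<psi> x)"
      unfolding mnorm_conj_def using pointwise by (intro lux_scale_le mono_conj_Phi) auto
    also have "\<dots> < ennreal 2 * ennreal (\<epsilon> / 2)"
      using \<psi>(2) by (intro ennreal_mult_strict_left_mono) auto
    also have "\<dots> = ennreal \<epsilon>"
      using \<open>0 < \<epsilon>\<close> ennreal_mult[of 2 "\<epsilon> / 2"] by simp
    finally show ?thesis .
  qed
  ultimately show ?thesis
    using that by blast
qed

lemma loc_integrable_indicator_norm: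
  assumes "loc_integrable \<Omega> w" "\<Omega> \<in> sets lebesgue" "compact K" "K \<subseteq> \<Omega>"
  shows "integrable (lebesgue_on \<Omega>) (\<lambda>x. indicator K x * norm (w x))"
proof -
  have "integrable (lebesgue_on K) (\<lambda>x. norm (w x))"
    using assms(1,3,4) unfolding loc_integrable_def by (blast intro: integrable_norm)
  then have "integrable lebesgue (\<lambda>x. indicator K x * norm (w x))"
    using assms(3) by (simp add: integrable_restrict_space compact_imp_closed)
  moreover have "(\<lambda>x. indicator \<Omega> x * (indicator K x * norm (w x))) = (\<lambda>x. indicator K x * norm (w x))"
    using assms(4) by (auto simp: indicator_def fun_eq_iff)
  ultimately show ?thesis
    using assms(2) by (simp add: integrable_restrict_space)
qed

lemma integrable_frob_bounded_support:
  fixes g w :: "'a \<Rightarrow> real^'n^'n"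
  assumes "integrable M (\<lambda>x. indicator K x * norm (w x))"
    and [measurable]: "g \<in> borel_measurable M" "w \<in> borel_measurable M"
    and "\<And>x. norm (g x) \<le> B" "\<And>x. x \<notin> K \<Longrightarrow> g x = 0"
  shows "integrable M (\<lambda>x. g x \<bar>:\<bar> w x)" "integrable M (\<lambda>x. norm (g x) * norm (w x))"
proof -
  have bound: "norm (g x) * norm (w x) \<le> B * (indicator K x * norm (w x))" for x
    using assms(4,5)[of x] by (cases "x \<in> K") (auto intro: mult_right_mono)
  show "integrable M (\<lambda>x. norm (g x) * norm (w x))"
    using bound by (intro integrable_bounded_by_mult[OF assms(1)]) auto
  show "integrable M (\<lambda>x. g x \<bar>:\<bar> w x)"
    using bound Cauchy_Schwarz_ineq2[of "g _" "w _"]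
    by (intro integrable_bounded_by_mult[OF assms(1)]) (auto simp: frob_eq_inner intro: order_trans)
qed

lemma integral_frob_le_Vtilde_approx:
  assumes wp: "weak_Phi \<Omega> \<phi>" and "open \<Omega>" and Vm: "Vtilde \<Omega> \<phi> w = ereal m"
    and T: "T \<in> borel_measurable (lebesgue_on \<Omega>)" "mnorm_conj \<Omega> \<phi> T \<le> 1"
    and \<Psi>: "\<Psi> \<in> C1c \<Omega>" "sym_field \<Psi>" "mnorm_conj \<Omega> \<phi> (\<lambda>x. \<Psi> x - T x) < ennreal \<eta>"
    and int: "integrable (lebesgue_on \<Omega>) (\<lambda>x. \<Psi> x \<bar>:\<bar> w x)"
      "integrable (lebesgue_on \<Omega>) (\<lambda>x. (\<Psi> x - T x) \<bar>:\<bar> w x)"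
  shows "(\<integral>x. T x \<bar>:\<bar> w x \<partial>lebesgue_on \<Omega>)
           \<le> m * (1 + \<eta>) + \<bar>\<integral>x. (\<Psi> x - T x) \<bar>:\<bar> w x \<partial>lebesgue_on \<Omega>\<bar>"
proof -
  let ?M = "lebesgue_on \<Omega>"
  have "0 < ennreal \<eta>"
    using \<Psi>(3) by (rule le_less_trans[OF zero_le])
  then have "0 < \<eta>"
    by simp
  have "\<Psi> \<in> borel_measurable ?M"
    using \<Psi>(1) \<open>open \<Omega>\<close> unfolding C1c_iff
    by (intro continuous_imp_measurable_on_sets_lebesgue continuous_on_subset[OF C1_imp_continuous_on]) auto
  then have "mnorm_conj \<Omega> \<phi> \<Psi> \<le> mnorm_conj \<Omega> \<phi> T + mnorm_conj \<Omega> \<phi> (\<lambda>x. \<Psi> x - T x)"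
    unfolding mnorm_conj_def using T(1) \<open>open \<Omega>\<close>
    by (intro lux_triangle[OF wp]) (auto simp: norm_triangle_sub)
  also have "\<dots> \<le> 1 + ennreal \<eta>"
    using T(2) \<Psi>(3) by (intro add_mono) auto
  also have "\<dots> = ennreal (1 + \<eta>)"
    using \<open>0 < \<eta>\<close> by (simp add: ennreal_plus)
  finally have "(\<integral>x. \<Psi> x \<bar>:\<bar> w x \<partial>?M) \<le> m * (1 + \<eta>)"
    using \<open>0 < \<eta>\<close> by (intro integral_frob_le_Vtilde[OF Vm \<Psi>(1,2)]) auto
  moreover have "(\<integral>x. T x \<bar>:\<bar> w x \<partial>?M) = (\<integral>x. \<Psi> x \<bar>:\<bar> w x \<partial>?M) - (\<integral>x. (\<Psi> x - T x) \<bar>:\<bar> w x \<partial>?M)"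
    using int by (simp add: frob_eq_inner inner_diff_left flip: Bochner_Integration.integral_diff)
  ultimately show ?thesis
    by linarith
qed

lemma mnorm_conj_soft_trunc_le:
  "0 < k \<Longrightarrow> mnorm_conj \<Omega> \<phi> (\<lambda>x. soft_trunc k (f x)) \<le> mnorm_conj \<Omega> \<phi> f"
  using lux_scale_le[OF mono_conj_Phi, of 1 \<Omega> "\<lambda>x. norm (soft_trunc k (f x))" "\<lambda>x. norm (f x)"]
  by (simp add: mnorm_conj_def norm_soft_trunc_le(2))

text \<open>The cut-off is chosen before the approximant, so that the compact set carrying the
  approximation error, and with it the modulus \<open>\<eta>\<close> of absolute continuity, does not depend on the
  approximant.\<close>

lemma C1c_dense_imp_frob_approx:
  fixes f :: "real^'n \<Rightarrow> real^'n^'n"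
  assumes "open \<Omega>" and wp: "weak_Phi \<Omega> \<phi>" and w: "loc_integrable \<Omega> w" and dense: "C1c_dense \<Omega> \<phi>"
    and f: "f \<in> L_conj \<Omega> \<phi>" "\<And>x i j. f x $ i $ j = f x $ j $ i" "\<And>x. x \<notin> K \<Longrightarrow> f x = 0"
    and K: "compact K" "K \<subseteq> \<Omega>" and "0 < k" "0 < \<epsilon>"
  obtains \<Psi> where "\<Psi> \<in> C1c \<Omega>" "sym_field \<Psi>"
    "mnorm_conj \<Omega> \<phi> (\<lambda>x. \<Psi> x - soft_trunc k (f x)) < ennreal \<epsilon>"
    "integrable (lebesgue_on \<Omega>) (\<lambda>x. \<Psi> x \<bar>:\<bar> w x)"
    "integrable (lebesgue_on \<Omega>) (\<lambda>x. (\<Psi> x - soft_trunc k (f x)) \<bar>:\<bar> w x)"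
    "\<bar>\<integral>x. (\<Psi> x - soft_trunc k (f x)) \<bar>:\<bar> w x \<partial>lebesgue_on \<Omega>\<bar> \<le> \<epsilon>"
proof -
  let ?M = "lebesgue_on \<Omega>"
  have \<Omega>: "\<Omega> \<in> sets lebesgue"
    using \<open>open \<Omega>\<close> by simp
  have [measurable]: "w \<in> borel_measurable ?M" "f \<in> borel_measurable ?M"
    using w f(1) by (auto simp: loc_integrable_def L_conj_def)
  obtain \<theta> :: "real^'n \<Rightarrow> real" where \<theta>: "C1 \<theta>" "\<And>x. 0 \<le> \<theta> x" "\<And>x. \<theta> x \<le> 1" "\<And>x. x \<in> K \<Longrightarrow> \<theta> x = 1"
    "compact (closure {x. \<theta> x \<noteq> 0})" "closure {x. \<theta> x \<noteq> 0} \<subseteq> \<Omega>"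
    using C1_cutoff_exists[OF K(1) \<open>open \<Omega>\<close> K(2)] by blast
  define K' where "K' = closure {x. \<theta> x \<noteq> 0}"
  have K': "compact K'" "K' \<subseteq> \<Omega>" "\<And>x. x \<notin> K' \<Longrightarrow> \<theta> x = 0" "K \<subseteq> K'"
    using \<theta> closure_subset[of "{x. \<theta> x \<noteq> 0}"] by (auto simp: K'_def)
  have W_int: "integrable ?M (\<lambda>x. indicator K' x * norm (w x))"
    by (rule loc_integrable_indicator_norm[OF w \<Omega> K'(1,2)])
  obtain \<eta> where "0 < \<eta>" and small: "\<And>a. a \<in> borel_measurable ?M \<Longrightarrow> (\<And>x. 0 \<le> a x) \<Longrightarrow>
      (\<And>x. a x \<le> 2 * k) \<Longrightarrow> (\<And>x. x \<notin> K' \<Longrightarrow> a x = 0) \<Longrightarrow> lux \<Omega> (conj_Phi \<phi>) a < ennreal \<eta> \<Longrightarrow>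
      (\<integral>x. a x * norm (w x) \<partial>?M) \<le> \<epsilon>"
  proof (rule lux_small_imp_integral_small[OF wp \<Omega> K'(1,2) _ _ W_int])
    show "(\<lambda>x. norm (w x)) \<in> borel_measurable ?M" "0 \<le> 2 * k"
      using \<open>0 < k\<close> by auto
  qed (use \<open>0 < \<epsilon>\<close> in auto)
  have "0 < min \<eta> \<epsilon>"
    using \<open>0 < \<eta>\<close> \<open>0 < \<epsilon>\<close> by simp
  then obtain \<Psi> where \<Psi>: "\<Psi> \<in> C1c \<Omega>" "sym_field \<Psi>" "\<And>x. norm (\<Psi> x) \<le> k" "\<And>x. \<theta> x = 0 \<Longrightarrow> \<Psi> x = 0"
    "mnorm_conj \<Omega> \<phi> (\<lambda>x. \<Psi> x - soft_trunc k (f x)) < ennreal (min \<eta> \<epsilon>)"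
    using C1c_dense_imp_truncated_approx[OF dense f \<theta> \<open>0 < k\<close>] by blast
  have [measurable]: "\<Psi> \<in> borel_measurable ?M"
    using \<Psi>(1) \<open>open \<Omega>\<close> unfolding C1c_iff
    by (intro continuous_imp_measurable_on_sets_lebesgue continuous_on_subset[OF C1_imp_continuous_on]) auto
  have diff_meas: "(\<lambda>x. \<Psi> x - soft_trunc k (f x)) \<in> borel_measurable ?M"
    unfolding soft_trunc_def by measurable
  have bounds: "norm (\<Psi> x - soft_trunc k (f x)) \<le> 2 * k" "x \<notin> K' \<Longrightarrow> \<Psi> x - soft_trunc k (f x) = 0" for x
  proof -
    show "norm (\<Psi> x - soft_trunc k (f x)) \<le> 2 * k"
      using norm_triangle_ineq4[of "\<Psi> x" "soft_trunc k (f x)"] \<Psi>(3)[of x]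
        norm_soft_trunc_le(1)[OF \<open>0 < k\<close>, of "f x"] by simp
    assume "x \<notin> K'"
    moreover have "x \<notin> K"
      using \<open>x \<notin> K'\<close> K'(4) by blast
    ultimately show "\<Psi> x - soft_trunc k (f x) = 0"
      using \<Psi>(4) K'(3) f(3) by simp
  qed
  have int: "integrable ?M (\<lambda>x. \<Psi> x \<bar>:\<bar> w x)" "integrable ?M (\<lambda>x. (\<Psi> x - soft_trunc k (f x)) \<bar>:\<bar> w x)"
    "integrable ?M (\<lambda>x. norm (\<Psi> x - soft_trunc k (f x)) * norm (w x))"
    using integrable_frob_bounded_support[where g=\<Psi>, OF W_int _ _ \<Psi>(3)] \<Psi>(4) K'(3)
      integrable_frob_bounded_support[where g="\<lambda>x. \<Psi> x - soft_trunc k (f x)", OF W_int diff_meas _ bounds]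
    by auto
  have "\<bar>\<integral>x. (\<Psi> x - soft_trunc k (f x)) \<bar>:\<bar> w x \<partial>?M\<bar> \<le> (\<integral>x. norm (\<Psi> x - soft_trunc k (f x)) * norm (w x) \<partial>?M)"
    using int(2,3) Cauchy_Schwarz_ineq2 unfolding frob_eq_inner
    by (intro order_trans[OF integral_abs_bound] integral_mono) auto
  also have "\<dots> \<le> \<epsilon>"
    using order.strict_trans2[OF \<Psi>(5) ennreal_leI[OF min.cobounded1]] bounds diff_meas
    unfolding mnorm_conj_def by (intro small) auto
  finally show ?thesis
    by (rule that[OF \<Psi>(1,2) order.strict_trans2[OF \<Psi>(5) ennreal_leI[OF min.cobounded2]] int(1,2)])
qed

lemma integral_soft_trunc_le_Vtilde:
  fixes f :: "real^'n \<Rightarrow> real^'n^'n"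
  assumes "open \<Omega>" and wp: "weak_Phi \<Omega> \<phi>" and w: "loc_integrable \<Omega> w"
    and dense: "C1c_dense \<Omega> \<phi>" and Vm: "Vtilde \<Omega> \<phi> w = ereal m"
    and f: "f \<in> borel_measurable (lebesgue_on \<Omega>)" "mnorm_conj \<Omega> \<phi> f \<le> 1"
      "\<And>x i j. f x $ i $ j = f x $ j $ i" "\<And>x. x \<notin> K \<Longrightarrow> f x = 0"
    and K: "compact K" "K \<subseteq> \<Omega>" and "0 < k"
  shows "(\<integral>x. soft_trunc k (f x) \<bar>:\<bar> w x \<partial>lebesgue_on \<Omega>) \<le> m"
proof (rule field_le_epsilon)
  fix e :: real assume "0 < e"
  have "0 \<le> m"
    using Vtilde_nonneg[of \<Omega> \<phi> w] Vm by simp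
  define \<epsilon> where "\<epsilon> = e / (2 * (m + 1))"
  have "0 < m + 1"
    using \<open>0 \<le> m\<close> by simp
  then have "0 < \<epsilon>" "(m + 1) * \<epsilon> = e / 2"
    using \<open>0 < e\<close> unfolding \<epsilon>_def by (simp_all add: field_simps)
  then have \<epsilon>: "0 < \<epsilon>" "m * \<epsilon> + \<epsilon> \<le> e"
    using \<open>0 < e\<close> by (simp_all add: algebra_simps)
  have "f \<in> L_conj \<Omega> \<phi>"
    using f(1) order.strict_trans1[OF f(2), of \<infinity>] by (simp add: L_conj_def)
  then obtain \<Psi> where "\<Psi> \<in> C1c \<Omega>" "sym_field \<Psi>"
    "mnorm_conj \<Omega> \<phi> (\<lambda>x. \<Psi> x - soft_trunc k (f x)) < ennreal \<epsilon>"
    "integrable (lebesgue_on \<Omega>) (\<lambda>x. \<Psi> x \<bar>:\<bar> w x)"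
    "integrable (lebesgue_on \<Omega>) (\<lambda>x. (\<Psi> x - soft_trunc k (f x)) \<bar>:\<bar> w x)"
    and err: "\<bar>\<integral>x. (\<Psi> x - soft_trunc k (f x)) \<bar>:\<bar> w x \<partial>lebesgue_on \<Omega>\<bar> \<le> \<epsilon>"
    by (rule C1c_dense_imp_frob_approx[OF \<open>open \<Omega>\<close> wp w dense _ f(3,4) K \<open>0 < k\<close> \<epsilon>(1)])
  moreover have "(\<lambda>x. soft_trunc k (f x)) \<in> borel_measurable (lebesgue_on \<Omega>)"
    using f(1) unfolding soft_trunc_def by measurable
  moreover have "mnorm_conj \<Omega> \<phi> (\<lambda>x. soft_trunc k (f x)) \<le> 1"
    using mnorm_conj_soft_trunc_le[OF \<open>0 < k\<close>] f(2) by (rule order_trans)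
  ultimately have "(\<integral>x. soft_trunc k (f x) \<bar>:\<bar> w x \<partial>lebesgue_on \<Omega>) \<le> m * (1 + \<epsilon>) + \<epsilon>"
    using integral_frob_le_Vtilde_approx[OF wp \<open>open \<Omega>\<close> Vm, of "\<lambda>x. soft_trunc k (f x)" \<Psi> \<epsilon>] err
    by linarith
  also have "\<dots> \<le> m + e"
    using \<epsilon>(2) by (simp add: algebra_simps)
  finally show "(\<integral>x. soft_trunc k (f x) \<bar>:\<bar> w x \<partial>lebesgue_on \<Omega>) \<le> m + e" .
qed

lemma inner_soft_trunc_normalized:
  fixes w :: "'a::real_inner"
  shows "soft_trunc k ((c / norm w) *\<^sub>R w) \<bullet> w = k / sqrt (k\<^sup>2 + c\<^sup>2) * c * norm w"
proof (cases "w = 0")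
  case False
  then have "((c / norm w) *\<^sub>R w) \<bullet> ((c / norm w) *\<^sub>R w) = c\<^sup>2" and "w \<bullet> w = (norm w)\<^sup>2"
    by (simp_all add: power2_norm_eq_inner[symmetric] power2_eq_square)
  then show ?thesis
    using False by (simp add: soft_trunc_def power2_eq_square)
qed (simp add: soft_trunc_def)

lemma integral_truncated_weight_le_Vtilde:
  assumes "open \<Omega>" and wp: "weak_Phi \<Omega> \<phi>" and w: "loc_integrable \<Omega> w"
    and w_sym: "\<And>x i j. x \<in> \<Omega> \<Longrightarrow> w x $ i $ j = w x $ j $ i"
    and dense: "C1c_dense \<Omega> \<phi>" and Vm: "Vtilde \<Omega> \<phi> w = ereal m"
    and v: "v \<in> borel_measurable (lebesgue_on \<Omega>)" "lux \<Omega> (conj_Phi \<phi>) v \<le> 1"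
    and K: "compact K" "K \<subseteq> \<Omega>" and "0 < k"
  shows "(\<integral>x. indicator K x * (k / sqrt (k\<^sup>2 + (v x)\<^sup>2)) * \<bar>v x\<bar> * norm (w x) \<partial>lebesgue_on \<Omega>) \<le> m"
proof -
  let ?M = "lebesgue_on \<Omega>"
  define f where "f x = (indicator K x * \<bar>v x\<bar> / norm (w x)) *\<^sub>R w x" for x
  have K_sets [measurable]: "K \<in> sets ?M"
    using K \<open>open \<Omega>\<close> by (simp add: sets_restrict_space_iff compact_imp_closed)
  have [measurable]: "w \<in> borel_measurable ?M"
    using w by (simp add: loc_integrable_def)
  have "f \<in> borel_measurable ?M"
    unfolding f_def[abs_def] using v(1) by measurable
  moreover have "mnorm_conj \<Omega> \<phi> f \<le> ennreal 1 * lux \<Omega> (conj_Phi \<phi>) v"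
    unfolding mnorm_conj_def f_def
    by (intro lux_scale_le mono_conj_Phi) (auto simp: indicator_def)
  moreover have "f x $ i $ j = f x $ j $ i" for x i j
    using w_sym[of x i j] K(2) by (cases "x \<in> K") (auto simp: f_def)
  moreover have "x \<notin> K \<Longrightarrow> f x = 0" for x
    by (simp add: f_def)
  ultimately have "(\<integral>x. soft_trunc k (f x) \<bar>:\<bar> w x \<partial>?M) \<le> m"
    using v(2) by (intro integral_soft_trunc_le_Vtilde[OF \<open>open \<Omega>\<close> wp w dense Vm _ _ _ _ K \<open>0 < k\<close>]) auto
  moreover have "soft_trunc k (f x) \<bar>:\<bar> w x = indicator K x * (k / sqrt (k\<^sup>2 + (v x)\<^sup>2)) * \<bar>v x\<bar> * norm (w x)"
    for x
    unfolding f_def frob_eq_inner inner_soft_trunc_normalized by (simp add: indicator_def)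
  ultimately show ?thesis
    by simp
qed

lemma soft_trunc_factor_tendsto_1:
  fixes t :: real
  assumes "0 \<le> t"
  shows "((\<lambda>k. k / sqrt (k\<^sup>2 + t)) \<longlongrightarrow> 1) at_top"
proof -
  have "((\<lambda>k. 1 / sqrt (1 + t * (inverse k)\<^sup>2)) \<longlongrightarrow> 1 / sqrt (1 + t * 0\<^sup>2)) at_top"
    by (intro tendsto_intros tendsto_inverse_0_at_top filterlim_ident) simp
  moreover have "\<forall>\<^sub>F k in at_top. 1 / sqrt (1 + t * (inverse k)\<^sup>2) = k / sqrt (k\<^sup>2 + t)"
  proof (rule eventually_mono[OF eventually_gt_at_top[of 0]])
    fix k :: real assume "0 < k"
    then have "k\<^sup>2 + t = k\<^sup>2 * (1 + t * (inverse k)\<^sup>2)"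
      by (simp add: field_simps)
    then have "sqrt (k\<^sup>2 + t) = k * sqrt (1 + t * (inverse k)\<^sup>2)"
      using \<open>0 < k\<close> by (simp add: real_sqrt_mult)
    then show "1 / sqrt (1 + t * (inverse k)\<^sup>2) = k / sqrt (k\<^sup>2 + t)"
      using \<open>0 < k\<close> by simp
  qed
  ultimately show ?thesis
    by (simp add: tendsto_cong)
qed

lemma assoc_norm_le_Vtilde:
  assumes "open \<Omega>" and wp: "weak_Phi \<Omega> \<phi>" and w: "loc_integrable \<Omega> w"
    and w_sym: "\<And>x i j. x \<in> \<Omega> \<Longrightarrow> w x $ i $ j = w x $ j $ i"
    and dense: "C1c_dense \<Omega> \<phi>" and Vm: "Vtilde \<Omega> \<phi> w = ereal m"
  shows "assoc_norm \<Omega> \<phi> w \<le> ennreal m"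
  unfolding assoc_norm_def
proof (rule SUP_least)
  let ?M = "lebesgue_on \<Omega>"
  fix v assume "v \<in> {v \<in> borel_measurable ?M. lux \<Omega> (conj_Phi \<phi>) v \<le> 1}"
  then have v [measurable]: "v \<in> borel_measurable ?M" and v_lux: "lux \<Omega> (conj_Phi \<phi>) v \<le> 1"
    by auto
  obtain C where C: "\<And>j. compact (C j)" "\<And>j. C j \<subseteq> \<Omega>"
    "\<And>j. C j \<subseteq> interior (C (Suc j))" "\<Union> (range C) = \<Omega>"
    "\<And>K. compact K \<Longrightarrow> K \<subseteq> \<Omega> \<Longrightarrow> \<exists>N. \<forall>j\<ge>N. K \<subseteq> C j"
    by (rule open_Union_compact_subsets[OF \<open>open \<Omega>\<close>]) (rule that)
  have [measurable]: "C j \<in> sets ?M" for j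
    using C(1,2) \<open>open \<Omega>\<close> by (simp add: sets_restrict_space_iff compact_imp_closed)
  have [measurable]: "w \<in> borel_measurable ?M"
    using w by (simp add: loc_integrable_def)
  define q where "q j x = real (Suc j) / sqrt ((real (Suc j))\<^sup>2 + (v x)\<^sup>2)" for j x
  define h where "h j x = indicator (C j) x * q j x * \<bar>v x\<bar> * norm (w x)" for j x
  have h_meas [measurable]: "h j \<in> borel_measurable ?M" for j
    unfolding h_def q_def by measurable
  have nn_bound: "(\<integral>\<^sup>+ x. h j x \<partial>?M) \<le> ennreal m" for j
  proof -
    have "q j x * \<bar>v x\<bar> \<le> real (Suc j)" for x
      using norm_soft_trunc_le(1)[of "real (Suc j)" "v x"]
      by (simp add: q_def soft_trunc_def abs_mult power2_eq_square)
    then have "q j x * \<bar>v x\<bar> * norm (w x) \<le> real (Suc j) * norm (w x)" for x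
      by (rule mult_right_mono) simp
    moreover have "0 \<le> q j x" for x
      by (simp add: q_def)
    ultimately have "\<bar>h j x\<bar> \<le> real (Suc j) * (indicator (C j) x * norm (w x))" for x
      by (simp add: h_def abs_mult indicator_def)
    then have "integrable ?M (h j)"
      using \<open>open \<Omega>\<close>
      by (intro integrable_bounded_by_mult[OF loc_integrable_indicator_norm[OF w _ C(1,2)] h_meas]) auto
    moreover have "(\<integral>x. h j x \<partial>?M) \<le> m"
      using integral_truncated_weight_le_Vtilde[OF \<open>open \<Omega>\<close> wp w w_sym dense Vm v v_lux C(1,2)]
      by (simp add: h_def q_def)
    moreover have "0 \<le> h j x" for x
      by (simp add: h_def q_def)
    ultimately show ?thesis
      by (simp add: nn_integral_eq_integral ennreal_leI)
  qed
  have lim: "(\<lambda>j. ennreal (h j x)) \<longlonglongrightarrow> ennreal (norm (w x) * \<bar>v x\<bar>)" if "x \<in> space ?M" for x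
  proof -
    have "\<forall>\<^sub>F j in sequentially. q j x * (\<bar>v x\<bar> * norm (w x)) = h j x"
      using C(5)[of "{x}"] \<open>x \<in> space ?M\<close> by (auto simp: eventually_sequentially h_def indicator_def)
    moreover have "(\<lambda>j. q j x) \<longlonglongrightarrow> 1"
      unfolding q_def using soft_trunc_factor_tendsto_1[of "(v x)\<^sup>2"]
      by (intro filterlim_compose[OF _ filterlim_compose[OF filterlim_real_sequentially filterlim_Suc]]) auto
    then have "(\<lambda>j. q j x * (\<bar>v x\<bar> * norm (w x))) \<longlonglongrightarrow> 1 * (\<bar>v x\<bar> * norm (w x))"
      by (rule tendsto_mult_right)
    ultimately have "(\<lambda>j. h j x) \<longlonglongrightarrow> 1 * (\<bar>v x\<bar> * norm (w x))"
      by (rule Lim_transform_eventually[rotated])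
    then show ?thesis
      by (simp add: mult.commute tendsto_ennrealI)
  qed
  have "(\<integral>\<^sup>+ x. ennreal (norm (w x) * \<bar>v x\<bar>) \<partial>?M) \<le> ennreal m"
    by (rule nn_integral_le_if_tendsto[where h="\<lambda>j x. ennreal (h j x)", OF _ lim nn_bound]) simp
  then show "(\<integral>\<^sup>+ x\<in>\<Omega>. ennreal (norm (w x) * \<bar>v x\<bar>) \<partial>lebesgue) \<le> ennreal m"
    using \<open>open \<Omega>\<close> by (simp add: nn_integral_restrict_space)
qed

theorem lemma3p13:
  fixes \<Omega> :: "(real^'n) set" and \<phi> :: "real^'n \<Rightarrow> real \<Rightarrow> ennreal"
    and u :: "real^'n \<Rightarrow> real^'n" and w :: "real^'n \<Rightarrow> real^'n^'n"
  assumes "open \<Omega>" and "bounded \<Omega>" and "connected \<Omega>"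
    and "weak_Phi \<Omega> \<phi>"
    and "u \<in> LD_loc \<Omega>"
    and "sym_grad_density \<Omega> u w"
  shows "Vtilde \<Omega> \<phi> w \<le> enn2ereal (assoc_norm \<Omega> \<phi> w) \<and>
         ((\<forall>f\<in>L_conj \<Omega> \<phi>. \<forall>\<epsilon>>0. \<exists>\<psi>\<in>C1c \<Omega>. mnorm_conj \<Omega> \<phi> (\<lambda>x. f x - \<psi> x) < ennreal \<epsilon>)
         \<longrightarrow> Vtilde \<Omega> \<phi> w = enn2ereal (assoc_norm \<Omega> \<phi> w))"
proof -
  have w: "loc_integrable \<Omega> w" and w_sym: "\<And>x i j. x \<in> \<Omega> \<Longrightarrow> w x $ i $ j = w x $ j $ i"
    using assms(6) unfolding sym_grad_density_def by auto
  have "enn2ereal (assoc_norm \<Omega> \<phi> w) \<le> Vtilde \<Omega> \<phi> w" if dense: "C1c_dense \<Omega> \<phi>"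
  proof (cases "Vtilde \<Omega> \<phi> w")
    case (real m)
    have "assoc_norm \<Omega> \<phi> w \<le> ennreal m"
      using w_sym by (rule assoc_norm_le_Vtilde[OF \<open>open \<Omega>\<close> assms(4) w _ dense real])
    then show ?thesis
      using real Vtilde_nonneg[of \<Omega> \<phi> w] by (simp add: less_eq_ennreal.rep_eq enn2ereal_ennreal)
  qed (use Vtilde_nonneg[of \<Omega> \<phi> w] in auto)
  then show ?thesis
    using Vtilde_le_assoc_norm[OF \<open>open \<Omega>\<close>] unfolding C1c_dense_def by (auto intro: antisym)
qed

end
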